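(* Let $\mathbb{K}$ be a field, $C$ a coseparable coalgebra, and $P_e(B,C,\psi)$ an $e$-copointed $(P,C)_\psi$-extension with bijective entwining map $\psi$. If there exists a colifting of the translation map $\tilde\tau:C\to P\otimes P$, then the canonical map $\mathrm{can}:P\otimes_BP\to P\otimes C$ is bijective and $P^C_e(B)$ is a principal $C$-coalgebra Galois extension.
   Context: A coalgebra $C$ is coseparable if there is a $(C,C)$-bicolinear map $\delta:C\otimes C\to C$ with $\delta\circ\Delta=\mathrm{id}_C$. An entwining structure $(P,C)_\psi$: algebra $P$, coalgebra $C$, linear $\psi:C\otimes P\to P\otimes C$, $\psi(c\otimes p)=p_\alpha\otimes c^\alpha$, with $\psi(c\otimes pq)=p_\alpha q_\beta\otimes c^{\alpha\beta}$, $\psi(c\otimes1)=1\otimes c$, $p_\alpha\otimes c^\alpha{}_{(1)}\otimes c^\alpha{}_{(2)}=p_{\alpha\beta}\otimes c_{(1)}{}^\beta\otimes c_{(2)}{}^\alpha$, $p_\alpha\varepsilon(c^\alpha)=\varepsilon(c)p$. $P(B,C,\psi)$ (a $(P,C)_\psi$-extension) means $P$ has a right $C$-coaction $\rho^C(p)=p_{(0)}\otimes p_{(1)}$ with $\rho^C(pq)=p_{(0)}\psi(p_{(1)}\otimes q)$ and $B=P^{\mathrm{co}C}=\{b:\rho^C(bp)=b\rho^C(p)\ \forall p\}$; it is $e$-copointed, for a grouplike $e\in C$, if $\rho^C(p)=\psi(e\otimes p)$ for all $p$. The canonical map is $p\otimes_Bp'\mapsto pp'_{(0)}\otimes p'_{(1)}$;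 a colifting of the translation map is a linear $\tilde\tau:C\to P\otimes P$, $c\mapsto c^{\tilde{[1]}}\otimes c^{\tilde{[2]}}$, with $c^{\tilde{[1]}}c^{\tilde{[2]}}{}_{(0)}\otimes c^{\tilde{[2]}}{}_{(1)}=1_P\otimes c$. Writing $\psi^{-1}$ for the inverse, the left $C$-coaction induced by $\psi$ is ${}^{C_\psi}\rho(p)=\psi^{-1}(p\otimes e)$. A strong connection form is a linear $\ell:C\to P\otimes P$ with $\ell(e)=1\otimes1$, $\widetilde{\mathrm{can}}(\ell(c))=1\otimes c$ (where $\widetilde{\mathrm{can}}(p\otimes p')=pp'_{(0)}\otimes p'_{(1)}$), $(P\otimes\rho^C)\circ\ell=(\ell\otimes C)\circ\Delta$ and $({}^{C_\psi}\rho\otimes P)\circ\ell=(C\otimes\ell)\circ\Delta$. An $e$-copointed $C$-coalgebra Galois extension $P^C_e(B)$ (canonical map bijective) is principal if the canonical entwining $\psi_{\mathrm{can}}(c\otimes p)=\mathrm{can}(\mathrm{can}^{-1}(1\otimes c)p)$ is bijective and a strong connection form exists. *)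

theory Defs
  imports "HOL-Library.Poly_Mapping"
begin

text \<open>Convention: every K-vector space is modelled as the free vector space
  with basis a type 'a, i.e. the finitely supported functions 'a =>0 'k.
  Then V (x) W is ('a * 'b) =>0 'k.\<close>

type_synonym ('a, 'k) vec = "'a \<Rightarrow>\<^sub>0 'k"

definition sc :: "'k::field \<Rightarrow> ('a, 'k) vec \<Rightarrow> ('a, 'k) vec" where
  "sc c v = Poly_Mapping.map (\<lambda>x. c * x) v"

definition bas :: "'a \<Rightarrow> ('a, 'k::field) vec" where
  "bas i = Poly_Mapping.single i 1"

definition lext :: "('a \<Rightarrow> ('b, 'k::field) vec) \<Rightarrow> ('a, 'k) vec \<Rightarrow> ('b, 'k) vec" where
  "lext g v = (\<Sum>i\<in>Poly_Mapping.keys v. sc (Poly_Mapping.lookup v i) (g i))"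

definition tprod :: "('a, 'k::field) vec \<Rightarrow> ('b, 'k) vec \<Rightarrow> ('a \<times> 'b, 'k) vec" where
  "tprod u v = (\<Sum>(i,j)\<in>Poly_Mapping.keys u \<times> Poly_Mapping.keys v. Poly_Mapping.single (i,j) (Poly_Mapping.lookup u i * Poly_Mapping.lookup v j))"

definition tmap :: "(('a, 'k::field) vec \<Rightarrow> ('c, 'k) vec) \<Rightarrow> (('b, 'k) vec \<Rightarrow> ('d, 'k) vec)
    \<Rightarrow> ('a \<times> 'b, 'k) vec \<Rightarrow> ('c \<times> 'd, 'k) vec" where
  "tmap f g = lext (\<lambda>(i,j). tprod (f (bas i)) (g (bas j)))"

definition assocL :: "('a \<times> ('b \<times> 'c), 'k::field) vec \<Rightarrow> (('a \<times> 'b) \<times> 'c, 'k) vec" where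
  "assocL = lext (\<lambda>(i,(j,k)). bas ((i,j),k))"

definition assocR :: "(('a \<times> 'b) \<times> 'c, 'k::field) vec \<Rightarrow> ('a \<times> ('b \<times> 'c), 'k) vec" where
  "assocR = lext (\<lambda>((i,j),k). bas (i,(j,k)))"

definition lcontr :: "(('a, 'k::field) vec \<Rightarrow> 'k) \<Rightarrow> ('a \<times> 'b, 'k) vec \<Rightarrow> ('b, 'k) vec" where
  "lcontr f = lext (\<lambda>(i,j). sc (f (bas i)) (bas j))"

definition rcontr :: "(('b, 'k::field) vec \<Rightarrow> 'k) \<Rightarrow> ('a \<times> 'b, 'k) vec \<Rightarrow> ('a, 'k) vec" where
  "rcontr f = lext (\<lambda>(i,j). sc (f (bas j)) (bas i))"

definition linmap :: "(('a, 'k::field) vec \<Rightarrow> ('b, 'k) vec) \<Rightarrow> bool" where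
  "linmap f \<longleftrightarrow> (\<forall>u v. f (u + v) = f u + f v) \<and> (\<forall>c v. f (sc c v) = sc c (f v))"

definition linfun :: "(('a, 'k::field) vec \<Rightarrow> 'k) \<Rightarrow> bool" where
  "linfun f \<longleftrightarrow> (\<forall>u v. f (u + v) = f u + f v) \<and> (\<forall>c v. f (sc c v) = c * f v)"

definition algebra :: "(('p, 'k::field) vec \<Rightarrow> ('p, 'k) vec \<Rightarrow> ('p, 'k) vec) \<Rightarrow> ('p, 'k) vec \<Rightarrow> bool" where
  "algebra mul one \<longleftrightarrow> (\<forall>q. linmap (\<lambda>p. mul p q)) \<and> (\<forall>p. linmap (mul p))
     \<and> (\<forall>p q r. mul (mul p q) r = mul p (mul q r))
     \<and> (\<forall>p. mul one p = p \<and> mul p one = p)"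

definition mulmap :: "(('p, 'k::field) vec \<Rightarrow> ('p, 'k) vec \<Rightarrow> ('p, 'k) vec) \<Rightarrow> ('p \<times> 'p, 'k) vec \<Rightarrow> ('p, 'k) vec" where
  "mulmap mul = lext (\<lambda>(i,j). mul (bas i) (bas j))"

definition coalgebra :: "(('c, 'k::field) vec \<Rightarrow> ('c \<times> 'c, 'k) vec) \<Rightarrow> (('c, 'k) vec \<Rightarrow> 'k) \<Rightarrow> bool" where
  "coalgebra \<Delta> \<epsilon> \<longleftrightarrow> linmap \<Delta> \<and> linfun \<epsilon>
     \<and> (\<forall>c. assocL (tmap id \<Delta> (\<Delta> c)) = tmap \<Delta> id (\<Delta> c))
     \<and> (\<forall>c. lcontr \<epsilon> (\<Delta> c) = c) \<and> (\<forall>c. rcontr \<epsilon> (\<Delta> c) = c)"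

text \<open>Coseparable: a (C,C)-bicolinear delta : C (x) C -> C with delta o Delta = id.
  C (x) C carries the left coaction Delta (x) C and the right coaction C (x) Delta.\<close>
definition coseparable :: "(('c, 'k::field) vec \<Rightarrow> ('c \<times> 'c, 'k) vec) \<Rightarrow> (('c, 'k) vec \<Rightarrow> 'k) \<Rightarrow> bool" where
  "coseparable \<Delta> \<epsilon> \<longleftrightarrow> (\<exists>\<delta> :: ('c \<times> 'c, 'k) vec \<Rightarrow> ('c, 'k) vec. linmap \<delta>
     \<and> (\<forall>x. \<Delta> (\<delta> x) = tmap \<delta> id (assocL (tmap id \<Delta> x)))
     \<and> (\<forall>x. \<Delta> (\<delta> x) = tmap id \<delta> (assocR (tmap \<Delta> id x)))
     \<and> (\<forall>c. \<delta> (\<Delta> c) = c))"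

definition grouplike :: "(('c, 'k::field) vec \<Rightarrow> ('c \<times> 'c, 'k) vec) \<Rightarrow> (('c, 'k) vec \<Rightarrow> 'k) \<Rightarrow> ('c, 'k) vec \<Rightarrow> bool" where
  "grouplike \<Delta> \<epsilon> e \<longleftrightarrow> \<Delta> e = tprod e e \<and> \<epsilon> e = 1"

definition entwining :: "(('p, 'k::field) vec \<Rightarrow> ('p, 'k) vec \<Rightarrow> ('p, 'k) vec) \<Rightarrow> ('p, 'k) vec
    \<Rightarrow> (('c, 'k) vec \<Rightarrow> ('c \<times> 'c, 'k) vec) \<Rightarrow> (('c, 'k) vec \<Rightarrow> 'k)
    \<Rightarrow> (('c \<times> 'p, 'k) vec \<Rightarrow> ('p \<times> 'c, 'k) vec) \<Rightarrow> bool" where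
  "entwining mul one \<Delta> \<epsilon> \<psi> \<longleftrightarrow> linmap \<psi>
     \<and> (\<forall>c p q. \<psi> (tprod c (mul p q))
           = tmap (mulmap mul) id (assocL (tmap id \<psi> (assocR (tprod (\<psi> (tprod c p)) q)))))
     \<and> (\<forall>c. \<psi> (tprod c one) = tprod one c)
     \<and> (\<forall>c p. tmap id \<Delta> (\<psi> (tprod c p))
           = assocR (tmap \<psi> id (assocL (tmap id \<psi> (assocR (tprod (\<Delta> c) p))))))
     \<and> (\<forall>c p. rcontr \<epsilon> (\<psi> (tprod c p)) = sc (\<epsilon> c) p)"

definition right_comodule :: "(('c, 'k::field) vec \<Rightarrow> ('c \<times> 'c, 'k) vec) \<Rightarrow> (('c, 'k) vec \<Rightarrow> 'k)
    \<Rightarrow> (('p, 'k) vec \<Rightarrow> ('p \<times> 'c, 'k) vec) \<Rightarrow> bool" where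
  "right_comodule \<Delta> \<epsilon> \<rho> \<longleftrightarrow> linmap \<rho>
     \<and> (\<forall>p. tmap \<rho> id (\<rho> p) = assocL (tmap id \<Delta> (\<rho> p)))
     \<and> (\<forall>p. rcontr \<epsilon> (\<rho> p) = p)"

definition entw_extension :: "(('p, 'k::field) vec \<Rightarrow> ('p, 'k) vec \<Rightarrow> ('p, 'k) vec)
    \<Rightarrow> (('c, 'k) vec \<Rightarrow> ('c \<times> 'c, 'k) vec) \<Rightarrow> (('c, 'k) vec \<Rightarrow> 'k)
    \<Rightarrow> (('c \<times> 'p, 'k) vec \<Rightarrow> ('p \<times> 'c, 'k) vec) \<Rightarrow> (('p, 'k) vec \<Rightarrow> ('p \<times> 'c, 'k) vec) \<Rightarrow> bool" where
  "entw_extension mul \<Delta> \<epsilon> \<psi> \<rho> \<longleftrightarrow> right_comodule \<Delta> \<epsilon> \<rho>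
     \<and> (\<forall>p q. \<rho> (mul p q) = tmap (mulmap mul) id (assocL (tmap id \<psi> (assocR (tprod (\<rho> p) q)))))"

definition coinv :: "(('p, 'k::field) vec \<Rightarrow> ('p, 'k) vec \<Rightarrow> ('p, 'k) vec)
    \<Rightarrow> (('p, 'k) vec \<Rightarrow> ('p \<times> 'c, 'k) vec) \<Rightarrow> ('p, 'k) vec set" where
  "coinv mul \<rho> = {b. \<forall>p. \<rho> (mul b p) = tmap (mul b) id (\<rho> p)}"

definition copointed :: "(('c \<times> 'p, 'k::field) vec \<Rightarrow> ('p \<times> 'c, 'k) vec) \<Rightarrow> (('p, 'k) vec \<Rightarrow> ('p \<times> 'c, 'k) vec)
    \<Rightarrow> ('c, 'k) vec \<Rightarrow> bool" where
  "copointed \<psi> \<rho> e \<longleftrightarrow> (\<forall>p. \<rho> p = \<psi> (tprod e p))"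

definition cantilde :: "(('p, 'k::field) vec \<Rightarrow> ('p, 'k) vec \<Rightarrow> ('p, 'k) vec)
    \<Rightarrow> (('p, 'k) vec \<Rightarrow> ('p \<times> 'c, 'k) vec) \<Rightarrow> ('p \<times> 'p, 'k) vec \<Rightarrow> ('p \<times> 'c, 'k) vec" where
  "cantilde mul \<rho> w = tmap (mulmap mul) id (assocL (tmap id \<rho> w))"

definition colifting :: "(('p, 'k::field) vec \<Rightarrow> ('p, 'k) vec \<Rightarrow> ('p, 'k) vec) \<Rightarrow> ('p, 'k) vec
    \<Rightarrow> (('p, 'k) vec \<Rightarrow> ('p \<times> 'c, 'k) vec) \<Rightarrow> (('c, 'k) vec \<Rightarrow> ('p \<times> 'p, 'k) vec) \<Rightarrow> bool" where
  "colifting mul one \<rho> \<tau> \<longleftrightarrow> linmap \<tau> \<and> (\<forall>c. cantilde mul \<rho> (\<tau> c) = tprod one c)"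

definition subspace :: "('a, 'k::field) vec set \<Rightarrow> bool" where
  "subspace V \<longleftrightarrow> 0 \<in> V \<and> (\<forall>u\<in>V. \<forall>v\<in>V. u + v \<in> V) \<and> (\<forall>c. \<forall>v\<in>V. sc c v \<in> V)"

definition kspan :: "('a, 'k::field) vec set \<Rightarrow> ('a, 'k) vec set" where
  "kspan S = \<Inter>{V. subspace V \<and> S \<subseteq> V}"

text \<open>P (x)_B P = (P (x) P) / span{pb (x) q - p (x) bq}, realised as the set of cosets.\<close>
definition balanced :: "(('p, 'k::field) vec \<Rightarrow> ('p, 'k) vec \<Rightarrow> ('p, 'k) vec) \<Rightarrow> ('p, 'k) vec set
    \<Rightarrow> ('p \<times> 'p, 'k) vec set" where
  "balanced mul B = kspan {tprod (mul p b) q - tprod p (mul b q) | p q b. b \<in> B}"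

definition tensorB :: "(('p, 'k::field) vec \<Rightarrow> ('p, 'k) vec \<Rightarrow> ('p, 'k) vec) \<Rightarrow> ('p, 'k) vec set
    \<Rightarrow> ('p \<times> 'p, 'k) vec set set" where
  "tensorB mul B = range (\<lambda>x. (\<lambda>n. x + n) ` balanced mul B)"

definition canB :: "(('p, 'k::field) vec \<Rightarrow> ('p, 'k) vec \<Rightarrow> ('p, 'k) vec)
    \<Rightarrow> (('p, 'k) vec \<Rightarrow> ('p \<times> 'c, 'k) vec) \<Rightarrow> ('p \<times> 'p, 'k) vec set \<Rightarrow> ('p \<times> 'c, 'k) vec" where
  "canB mul \<rho> X = cantilde mul \<rho> (SOME x. x \<in> X)"

text \<open>Canonical entwining psi_can(c (x) p) = can(can^{-1}(1 (x) c) p), extended linearly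
  from basis tensors; the right P-action on P (x)_B P is computed on a representative.\<close>
definition psican :: "(('p, 'k::field) vec \<Rightarrow> ('p, 'k) vec \<Rightarrow> ('p, 'k) vec) \<Rightarrow> ('p, 'k) vec
    \<Rightarrow> (('p, 'k) vec \<Rightarrow> ('p \<times> 'c, 'k) vec) \<Rightarrow> ('c \<times> 'p, 'k) vec \<Rightarrow> ('p \<times> 'c, 'k) vec" where
  "psican mul one \<rho> = lext (\<lambda>(i,j). cantilde mul \<rho>
      (tmap id (\<lambda>q. mul q (bas j))
        (SOME x. x \<in> inv_into (tensorB mul (coinv mul \<rho>)) (canB mul \<rho>) (tprod one (bas i)))))"

text \<open>Strong connection form w.r.t. the entwining psi, left coaction p |-> psi^{-1}(p (x) e).\<close>
definition strong_connection :: "(('p, 'k::field) vec \<Rightarrow> ('p, 'k) vec \<Rightarrow> ('p, 'k) vec) \<Rightarrow> ('p, 'k) vec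
    \<Rightarrow> (('c, 'k) vec \<Rightarrow> ('c \<times> 'c, 'k) vec) \<Rightarrow> (('p, 'k) vec \<Rightarrow> ('p \<times> 'c, 'k) vec)
    \<Rightarrow> (('c \<times> 'p, 'k) vec \<Rightarrow> ('p \<times> 'c, 'k) vec) \<Rightarrow> ('c, 'k) vec
    \<Rightarrow> (('c, 'k) vec \<Rightarrow> ('p \<times> 'p, 'k) vec) \<Rightarrow> bool" where
  "strong_connection mul one \<Delta> \<rho> \<psi> e ell \<longleftrightarrow> linmap ell
     \<and> ell e = tprod one one
     \<and> (\<forall>c. cantilde mul \<rho> (ell c) = tprod one c)
     \<and> (\<forall>c. tmap id \<rho> (ell c) = assocR (tmap ell id (\<Delta> c)))
     \<and> (\<forall>c. tmap (\<lambda>p. inv \<psi> (tprod p e)) id (ell c) = assocL (tmap id ell (\<Delta> c)))"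

definition principal :: "(('p, 'k::field) vec \<Rightarrow> ('p, 'k) vec \<Rightarrow> ('p, 'k) vec) \<Rightarrow> ('p, 'k) vec
    \<Rightarrow> (('c, 'k) vec \<Rightarrow> ('c \<times> 'c, 'k) vec) \<Rightarrow> (('p, 'k) vec \<Rightarrow> ('p \<times> 'c, 'k) vec)
    \<Rightarrow> ('c, 'k) vec \<Rightarrow> bool" where
  "principal mul one \<Delta> \<rho> e \<longleftrightarrow>
     bij_betw (canB mul \<rho>) (tensorB mul (coinv mul \<rho>)) UNIV
     \<and> bij (psican mul one \<rho>)
     \<and> (\<exists>ell. strong_connection mul one \<Delta> \<rho> (psican mul one \<rho>) e ell)"

end

theory Submission
  imports Defs
begin

text \<open>Coseparability of \<open>C\<close> provides Larson's functional \<open>f = \<epsilon> \<circ> \<delta>\<close> on \<open>C \<otimes> C\<close>, with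
  \<open>f(c\<^sub>1 \<otimes> c\<^sub>2) = \<epsilon>(c)\<close> and \<open>c\<^sub>1 f(c\<^sub>2 \<otimes> d) = f(c \<otimes> d\<^sub>1) d\<^sub>2\<close>. Averaging the colifting
  \<open>\<tau>\<close> (normalized so that \<open>\<tau>(e) = 1 \<otimes> 1\<close>) with \<open>f\<close> against the right coaction of \<open>P\<close> makes it right
  \<open>C\<close>-colinear, and averaging once more against the left coaction \<open>p \<mapsto> \<psi>\<^sup>-\<^sup>1(p \<otimes> e)\<close> makes it
  left colinear as well; the result \<open>\<ell>\<close> is a strong connection. Then \<open>p \<otimes> c \<mapsto> p \<ell>(c)\<^sup>1 \<otimes> \<ell>(c)\<^sup>2\<close>
  is a right inverse of the canonical map, and left colinearity puts the first legs of
  \<open>q\<^sub>0 \<ell>(q\<^sub>1)\<^sup>1 \<otimes> \<ell>(q\<^sub>1)\<^sup>2\<close> into \<open>B\<close>, which makes it a left inverse on \<open>P \<otimes>\<^sub>B P\<close>. Finally, \<open>can\<close>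
  is right \<open>P\<close>-linear for the action induced by \<open>\<psi>\<close>, so the canonical entwining is \<open>\<psi>\<close> itself.\<close>

section \<open>Linear algebra of free vector spaces\<close>

lemma lookup_sc [simp]: "Poly_Mapping.lookup (sc c v) i = c * Poly_Mapping.lookup v i"
  by (simp add: sc_def map.rep_eq when_def)

lemma lookup_bas: "Poly_Mapping.lookup (bas i) j = (if i = j then 1 else 0)"
  by (simp add: bas_def lookup_single when_def)

lemma sc_add [simp]: "sc c (u + v) = sc c u + sc c v"
  by (rule poly_mapping_eqI) (simp add: lookup_add algebra_simps)

lemma sc_add_left: "sc (a + b) v = sc a v + sc b v"
  by (rule poly_mapping_eqI) (simp add: lookup_add algebra_simps)

lemma sc_sc [simp]: "sc a (sc b v) = sc (a * b) v"
  by (rule poly_mapping_eqI) (simp add: algebra_simps)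

lemma sc_one [simp]: "sc 1 v = v"
  by (rule poly_mapping_eqI) simp

lemma sc_zero_left [simp]: "sc 0 v = 0"
  by (rule poly_mapping_eqI) simp

lemma sc_zero_right [simp]: "sc c 0 = 0"
  by (rule poly_mapping_eqI) simp

lemma sc_minus: "sc c (u - v) = sc c u - sc c v"
  by (rule poly_mapping_eqI) (simp add: lookup_minus algebra_simps)

lemma sc_minus_one: "sc (-1) v = - v"
  by (rule poly_mapping_eqI) simp

lemma sc_sum: "sc c (sum f S) = (\<Sum>i\<in>S. sc c (f i))"
  by (induct S rule: infinite_finite_induct) auto

lemma sum_sc_left: "(\<Sum>i\<in>S. sc (b i) w) = sc (\<Sum>i\<in>S. b i) w"
  by (induct S rule: infinite_finite_induct) (auto simp: sc_add_left)

lemma keys_sc_subset: "Poly_Mapping.keys (sc c v) \<subseteq> Poly_Mapping.keys v"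
  by (auto simp: in_keys_iff)

lemma lext_superset:
  assumes "finite S" "Poly_Mapping.keys v \<subseteq> S"
  shows "lext g v = (\<Sum>i\<in>S. sc (Poly_Mapping.lookup v i) (g i))"
  unfolding lext_def
  by (rule sum.mono_neutral_left[OF assms]) (auto simp: in_keys_iff)

lemma lext_add [simp]: "lext g (u + v) = lext g u + lext g v"
proof -
  let ?S = "Poly_Mapping.keys u \<union> Poly_Mapping.keys v"
  have "finite ?S" "Poly_Mapping.keys (u + v) \<subseteq> ?S"
    by (simp_all add: keys_add)
  then show ?thesis
    by (simp add: lext_superset[of ?S] lookup_add sc_add_left sum.distrib)
qed

lemma lext_sc [simp]: "lext g (sc c v) = sc c (lext g v)"
  using keys_sc_subset[of c v] by (simp add: lext_superset[of "Poly_Mapping.keys v"] sc_sum)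

lemma lext_bas [simp]: "lext g (bas i) = g i"
  by (simp add: lext_def bas_def)

lemma lext_bas_id [simp]: "lext bas v = v"
proof (rule poly_mapping_eqI)
  fix k
  have "Poly_Mapping.lookup (lext bas v) k
      = (\<Sum>x\<in>Poly_Mapping.keys v. if x = k then Poly_Mapping.lookup v x else 0)"
    unfolding lext_def lookup_sum lookup_sc lookup_bas by (intro sum.cong) auto
  then show "Poly_Mapping.lookup (lext bas v) k = Poly_Mapping.lookup v k"
    by (simp add: in_keys_iff)
qed

lemma lext_sc_fun:
  "lext (\<lambda>i. sc (a i) w) u = sc (\<Sum>i\<in>Poly_Mapping.keys u. Poly_Mapping.lookup u i * a i) w"
  unfolding lext_def by (simp add: sum_sc_left)

lemma linmap_lext [simp]: "linmap (lext g)"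
  by (simp add: linmap_def)

lemma linmapD:
  assumes "linmap f"
  shows "f (u + v) = f u + f v" "f (sc c v) = sc c (f v)"
  using assms by (auto simp: linmap_def)

lemma linmap_zero: "linmap f \<Longrightarrow> f 0 = 0"
  using linmapD(2)[of f 0 0] by simp

lemma linmap_minus:
  assumes "linmap f"
  shows "f (x - y) = f x - f y"
proof -
  have "f (x - y) = f (x + sc (-1) y)"
    by (simp add: sc_minus_one)
  also have "\<dots> = f x + sc (-1) (f y)"
    using linmapD[OF assms] by simp
  finally show ?thesis
    by (simp add: sc_minus_one)
qed

lemma linmap_sum: "linmap f \<Longrightarrow> f (sum g S) = (\<Sum>i\<in>S. f (g i))"
  by (induct S rule: infinite_finite_induct) (auto simp: linmap_zero linmapD)

lemma linmap_lext_comm: "linmap F \<Longrightarrow> F (lext h v) = lext (\<lambda>j. F (h j)) v"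
  by (simp add: lext_def linmap_sum linmapD)

lemma linmap_expand: "linmap F \<Longrightarrow> lext (\<lambda>i. F (bas i)) v = F v"
  using linmap_lext_comm[of F bas v] by simp

lemma id_lambda [simp]: "(\<lambda>x. x) = id"
  by (simp add: id_def)

lemma linmap_id [simp]: "linmap id"
  by (simp add: linmap_def)

lemma linmap_sc [simp]: "linmap (sc c)"
  by (simp add: linmap_def mult.commute)

lemma linmap_add_fun: "linmap f \<Longrightarrow> linmap g \<Longrightarrow> linmap (\<lambda>a. f a + g a)"
  by (simp add: linmap_def)

lemma linmap_sc_fun: "linmap f \<Longrightarrow> linmap (\<lambda>a. sc c (f a))"
  by (simp add: linmap_def mult.commute)

lemma linfunD:
  assumes "linfun f"
  shows "f (u + v) = f u + f v" "f (sc c v) = c * f v"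
  using assms by (auto simp: linfun_def)

lemma linfun_zero: "linfun f \<Longrightarrow> f 0 = 0"
  using linfunD(2)[of f 0 0] by simp

lemma linfun_expand:
  assumes "linfun f"
  shows "f v = (\<Sum>i\<in>Poly_Mapping.keys v. Poly_Mapping.lookup v i * f (bas i))"
proof -
  have "f (sum g S) = (\<Sum>i\<in>S. f (g i))" for g and S :: "'a set"
    by (induct S rule: infinite_finite_induct) (auto simp: linfun_zero[OF assms] linfunD[OF assms])
  then show ?thesis
    using lext_bas_id[of v] unfolding lext_def
    by (metis (no_types, lifting) assms linfunD(2) sum.cong)
qed

lemma linfun_lookup [simp]: "linfun (\<lambda>v. Poly_Mapping.lookup v j)"
  by (simp add: linfun_def lookup_add)

lemma lookup_tprod [simp]:
  "Poly_Mapping.lookup (tprod u v) (i, j) = Poly_Mapping.lookup u i * Poly_Mapping.lookup v j"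
proof -
  have "Poly_Mapping.lookup (case x of (a, b) \<Rightarrow>
          Poly_Mapping.single (a, b) (Poly_Mapping.lookup u a * Poly_Mapping.lookup v b)) (i, j)
      = (if x = (i, j) then Poly_Mapping.lookup u i * Poly_Mapping.lookup v j else 0)" for x
    by (auto simp: lookup_single when_def split: prod.split)
  then show ?thesis
    unfolding tprod_def lookup_sum by (auto simp: in_keys_iff)
qed

lemma tprod_add1 [simp]: "tprod (u + u') v = tprod u v + tprod u' v"
  by (rule poly_mapping_eqI) (auto simp: lookup_add algebra_simps)

lemma tprod_add2 [simp]: "tprod u (v + v') = tprod u v + tprod u v'"
  by (rule poly_mapping_eqI) (auto simp: lookup_add algebra_simps)

lemma tprod_sc1 [simp]: "tprod (sc c u) v = sc c (tprod u v)"
  by (rule poly_mapping_eqI) (auto simp: algebra_simps)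

lemma tprod_sc2 [simp]: "tprod u (sc c v) = sc c (tprod u v)"
  by (rule poly_mapping_eqI) (auto simp: algebra_simps)

lemma tprod_bas: "tprod (bas i) (bas j) = bas (i, j)"
  by (rule poly_mapping_eqI) (auto simp: lookup_bas split: if_split_asm)

lemma bas_pair [simp]: "bas (i, j) = tprod (bas i) (bas j)"
  by (simp add: tprod_bas)

lemma linmap_tprod1 [simp]: "linmap (\<lambda>u. tprod u v)"
  by (simp add: linmap_def)

lemma linmap_tprod2 [simp]: "linmap (tprod u)"
  by (simp add: linmap_def)

lemma lext_tprod_left [simp]: "lext (\<lambda>i. tprod (a i) w) u = tprod (lext a u) w"
  using linmap_lext_comm[OF linmap_tprod1[of w], of a u] by simp

lemma lext_tprod_right [simp]: "lext (\<lambda>i. tprod w (a i)) u = tprod w (lext a u)"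
  using linmap_lext_comm[OF linmap_tprod2[of w], of a u] by simp

lemma lext_tprod [simp]: "lext g (tprod u v) = lext (\<lambda>i. lext (\<lambda>j. g (i, j)) v) u"
proof -
  have l1: "linmap (\<lambda>u. lext g (tprod u v))"
    by (simp add: linmap_def)
  have l2: "linmap (\<lambda>v. lext g (tprod (bas i) v))" for i
    by (simp add: linmap_def)
  have "lext g (tprod u v) = lext (\<lambda>i. lext g (tprod (bas i) v)) u"
    using linmap_expand[OF l1] by simp
  also have "\<dots> = lext (\<lambda>i. lext (\<lambda>j. g (i, j)) v) u"
    using linmap_expand[OF l2, symmetric] by (simp del: bas_pair add: tprod_bas)
  finally show ?thesis .
qed

lemma tensor_induct [case_names tprod add sc]:
  fixes x :: "('a \<times> 'b, 'k::field) vec"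
  assumes T: "\<And>u v. P (tprod u v)" and A: "\<And>x y. P x \<Longrightarrow> P y \<Longrightarrow> P (x + y)"
    and S: "\<And>c x. P x \<Longrightarrow> P (sc c x)"
  shows "P x"
proof -
  have "P (\<Sum>k\<in>F. sc (Poly_Mapping.lookup x k) (bas k))" if "finite F" for F
    using that
  proof induct
    case empty
    show ?case using S[OF T, of 0 0 0] by simp
  next
    case (insert k F)
    obtain i j where k: "k = (i, j)" by force
    show ?case
      using insert by (simp add: A S T k del: bas_pair) (metis A S T tprod_bas)
  qed
  then have "P (\<Sum>k\<in>Poly_Mapping.keys x. sc (Poly_Mapping.lookup x k) (bas k))"
    by simp
  then show ?thesis
    using lext_bas_id[of x] unfolding lext_def by simp
qed

lemma tmap_tprod [simp]: "linmap f \<Longrightarrow> linmap g \<Longrightarrow> tmap f g (tprod u v) = tprod (f u) (g v)"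
  by (simp add: tmap_def linmap_expand)

lemma tmap_add [simp]: "tmap f g (x + y) = tmap f g x + tmap f g y"
  by (simp add: tmap_def)

lemma tmap_sc [simp]: "tmap f g (sc c x) = sc c (tmap f g x)"
  by (simp add: tmap_def)

lemma linmap_tmap [simp]: "linmap (tmap f g)"
  by (simp add: tmap_def)

lemma tmap_add_fun [simp]:
  "linmap f \<Longrightarrow> linmap g \<Longrightarrow> tmap (\<lambda>a. f a + g a) id x = tmap f id x + tmap g id x"
  by (induct x rule: tensor_induct) (simp_all add: linmap_add_fun)

lemma tmap_sc_fun [simp]: "linmap f \<Longrightarrow> tmap (\<lambda>a. sc c (f a)) id x = sc c (tmap f id x)"
  by (induct x rule: tensor_induct) (simp_all add: linmap_sc_fun mult.commute)

lemma assocL_tprod [simp]: "assocL (tprod u (tprod v w)) = tprod (tprod u v) w"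
  by (simp add: assocL_def)

lemma assocR_tprod [simp]: "assocR (tprod (tprod u v) w) = tprod u (tprod v w)"
  by (simp add: assocR_def)

lemma assocL_add [simp]: "assocL (x + y) = assocL x + assocL y"
  by (simp add: assocL_def)

lemma assocL_sc [simp]: "assocL (sc c x) = sc c (assocL x)"
  by (simp add: assocL_def)

lemma assocR_add [simp]: "assocR (x + y) = assocR x + assocR y"
  by (simp add: assocR_def)

lemma assocR_sc [simp]: "assocR (sc c x) = sc c (assocR x)"
  by (simp add: assocR_def)

lemma linmap_assocL [simp]: "linmap assocL"
  by (simp add: assocL_def)

lemma linmap_assocR [simp]: "linmap assocR"
  by (simp add: assocR_def)

lemma assocL_assocR [simp]: "assocL (assocR x) = x"
  by (induct x rule: tensor_induct)
    (auto intro: tensor_induct[of "\<lambda>y. assocL (assocR (tprod y v)) = tprod y v" for v])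

lemma assocR_assocL [simp]: "assocR (assocL x) = x"
  by (induct x rule: tensor_induct)
    (auto intro: tensor_induct[of "\<lambda>y. assocR (assocL (tprod u y)) = tprod u y" for u])

lemma rcontr_tprod [simp]: "linfun f \<Longrightarrow> rcontr f (tprod u v) = sc (f v) u"
  using linmap_expand[OF linmap_sc[of "f v"], of u]
  by (simp add: rcontr_def lext_sc_fun linfun_expand[of f v] mult.commute)

lemma lcontr_tprod [simp]: "linfun f \<Longrightarrow> lcontr f (tprod u v) = sc (f u) v"
proof -
  assume f: "linfun f"
  have "lext (\<lambda>j. sc (f (bas i)) (bas j)) v = sc (f (bas i)) v" for i
    using linmap_expand[OF linmap_sc[of "f (bas i)"], of v] by simp
  then show ?thesis
    by (simp add: lcontr_def lext_sc_fun linfun_expand[OF f, of u] mult.commute)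
qed

lemma rcontr_add [simp]: "rcontr f (x + y) = rcontr f x + rcontr f y"
  by (simp add: rcontr_def)

lemma rcontr_sc [simp]: "rcontr f (sc c x) = sc c (rcontr f x)"
  by (simp add: rcontr_def)

lemma lcontr_add [simp]: "lcontr f (x + y) = lcontr f x + lcontr f y"
  by (simp add: lcontr_def)

lemma lcontr_sc [simp]: "lcontr f (sc c x) = sc c (lcontr f x)"
  by (simp add: lcontr_def)

lemma linmap_rcontr [simp]: "linmap (rcontr f)"
  by (simp add: rcontr_def)

lemma linmap_lcontr [simp]: "linmap (lcontr f)"
  by (simp add: lcontr_def)

lemma rcontr_tmap:
  assumes "linmap h" "linfun \<phi>"
  shows "h (rcontr \<phi> t) = rcontr \<phi> (tmap h id t)"
  by (induct t rule: tensor_induct) (simp_all add: assms linmapD[OF assms(1)])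

lemma mulmap_add [simp]: "mulmap m (x + y) = mulmap m x + mulmap m y"
  by (simp add: mulmap_def)

lemma mulmap_sc [simp]: "mulmap m (sc c x) = sc c (mulmap m x)"
  by (simp add: mulmap_def)

lemma linmap_mulmap [simp]: "linmap (mulmap m)"
  by (simp add: mulmap_def)

lemma mulmap_tprod:
  assumes "\<And>q. linmap (\<lambda>p. m p q)" "\<And>p. linmap (m p)"
  shows "mulmap m (tprod u v) = m u v"
  using linmap_expand[OF assms(1)] linmap_expand[OF assms(2)] by (simp add: mulmap_def)

definition col :: "'b \<Rightarrow> ('a \<times> 'b, 'k::field) vec \<Rightarrow> ('a, 'k) vec" where
  "col j t = rcontr (\<lambda>v. Poly_Mapping.lookup v j) t"

lemma lookup_col: "Poly_Mapping.lookup (col j t) i = Poly_Mapping.lookup t (i, j)"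
proof -
  have "Poly_Mapping.lookup (col j t) i
      = (\<Sum>k\<in>Poly_Mapping.keys t. if k = (i, j) then Poly_Mapping.lookup t k else 0)"
    unfolding col_def rcontr_def lext_def lookup_sum
    by (intro sum.cong) (auto simp: lookup_bas split: prod.splits)
  then show ?thesis
    by (simp add: in_keys_iff)
qed

lemma col_decomp: "t = (\<Sum>j\<in>snd ` Poly_Mapping.keys t. tprod (col j t) (bas j))"
proof (rule poly_mapping_eqI)
  fix k :: "'a \<times> 'b"
  obtain i j' where k: "k = (i, j')" by force
  have "Poly_Mapping.lookup (\<Sum>j\<in>snd ` Poly_Mapping.keys t. tprod (col j t) (bas j)) (i, j')
      = (\<Sum>j\<in>snd ` Poly_Mapping.keys t. if j = j' then Poly_Mapping.lookup t (i, j') else 0)"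
    unfolding lookup_sum by (intro sum.cong) (auto simp: lookup_col lookup_bas simp del: bas_pair)
  also have "\<dots> = Poly_Mapping.lookup t (i, j')"
    by (cases "j' \<in> snd ` Poly_Mapping.keys t") (force simp: in_keys_iff)+
  finally show "Poly_Mapping.lookup t k
      = Poly_Mapping.lookup (\<Sum>j\<in>snd ` Poly_Mapping.keys t. tprod (col j t) (bas j)) k"
    by (simp add: k)
qed

lemma col_tmap: "linmap h \<Longrightarrow> h (col j t) = col j (tmap h id t)"
  unfolding col_def by (rule rcontr_tmap) simp_all

lemma subspace_kspan: "subspace (kspan S)"
  by (auto simp: subspace_def kspan_def)

lemma kspan_superset: "S \<subseteq> kspan S"
  by (auto simp: kspan_def)

lemma kspan_least: "subspace V \<Longrightarrow> S \<subseteq> V \<Longrightarrow> kspan S \<subseteq> V"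
  by (auto simp: kspan_def)

lemma subspace_sum: "subspace V \<Longrightarrow> (\<And>i. i \<in> J \<Longrightarrow> f i \<in> V) \<Longrightarrow> sum f J \<in> V"
  by (induct J rule: infinite_finite_induct) (auto simp: subspace_def)

lemma subspace_uminus: "subspace V \<Longrightarrow> x \<in> V \<Longrightarrow> - x \<in> V"
  by (metis sc_minus_one subspace_def)

lemma subspace_diff: "subspace V \<Longrightarrow> x \<in> V \<Longrightarrow> y \<in> V \<Longrightarrow> x - y \<in> V"
  by (metis diff_conv_add_uminus subspace_def subspace_uminus)

lemma subspace_coset_eq:
  assumes "subspace V" "x - y \<in> V"
  shows "(\<lambda>n. x + n) ` V = (\<lambda>n. y + n) ` V"
proof -
  have "(\<lambda>n. a + n) ` V \<subseteq> (\<lambda>n. b + n) ` V" if "a - b \<in> V" for a b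
  proof
    fix z assume "z \<in> (\<lambda>n. a + n) ` V"
    then obtain n where "n \<in> V" "z = a + n" by blast
    with that assms(1) show "z \<in> (\<lambda>n. b + n) ` V"
      by (auto simp: subspace_def intro!: image_eqI[where x = "(a - b) + n"])
  qed
  moreover have "y - x \<in> V"
    using subspace_uminus[OF assms] by simp
  ultimately show ?thesis
    using assms(2) by blast
qed

section \<open>Coalgebras and coseparability\<close>

locale coalg =
  fixes \<Delta> :: "('c, 'k::field) vec \<Rightarrow> ('c \<times> 'c, 'k) vec"
    and \<epsilon> :: "('c, 'k) vec \<Rightarrow> 'k"
  assumes coalgebra: "coalgebra \<Delta> \<epsilon>"
begin

lemma linmap_Delta [simp]: "linmap \<Delta>"
  using coalgebra by (simp add: coalgebra_def)

lemma linfun_eps [simp]: "linfun \<epsilon>"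
  using coalgebra by (simp add: coalgebra_def)

lemma coassoc: "assocL (tmap id \<Delta> (\<Delta> c)) = tmap \<Delta> id (\<Delta> c)"
  using coalgebra by (simp add: coalgebra_def)

lemma coassoc': "tmap id \<Delta> (\<Delta> c) = assocR (tmap \<Delta> id (\<Delta> c))"
  by (metis assocR_assocL coassoc)

lemma counit_left [simp]: "lcontr \<epsilon> (\<Delta> c) = c"
  using coalgebra by (simp add: coalgebra_def)

lemma counit_right [simp]: "rcontr \<epsilon> (\<Delta> c) = c"
  using coalgebra by (simp add: coalgebra_def)

lemma Delta_add [simp]: "\<Delta> (x + y) = \<Delta> x + \<Delta> y"
  using linmapD[OF linmap_Delta] by blast

lemma Delta_sc [simp]: "\<Delta> (sc c x) = sc c (\<Delta> x)"
  using linmapD[OF linmap_Delta] by blast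

end

locale coseparable_coalg = coalg +
  fixes \<delta> :: "('c \<times> 'c, 'k::field) vec \<Rightarrow> ('c, 'k) vec"
  assumes linmap_delta [simp]: "linmap \<delta>"
    and delta_colinear_left: "\<And>x. \<Delta> (\<delta> x) = tmap \<delta> id (assocL (tmap id \<Delta> x))"
    and delta_colinear_right: "\<And>x. \<Delta> (\<delta> x) = tmap id \<delta> (assocR (tmap \<Delta> id x))"
    and delta_Delta [simp]: "\<And>c. \<delta> (\<Delta> c) = c"
begin

lemma delta_add [simp]: "\<delta> (x + y) = \<delta> x + \<delta> y"
  using linmapD[OF linmap_delta] by blast

lemma delta_sc [simp]: "\<delta> (sc c x) = sc c (\<delta> x)"
  using linmapD[OF linmap_delta] by blast

definition cosep_form :: "('c \<times> 'c, 'k) vec \<Rightarrow> 'k" where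
  "cosep_form x = \<epsilon> (\<delta> x)"

lemma linfun_cosep_form [simp]: "linfun cosep_form"
  by (simp add: linfun_def cosep_form_def linfunD[OF linfun_eps])

lemma cosep_form_Delta [simp]: "cosep_form (\<Delta> c) = \<epsilon> c"
  by (simp add: cosep_form_def)

lemma delta_lcontr: "\<delta> x = lcontr cosep_form (assocL (tmap id \<Delta> x))"
proof -
  have "lcontr \<epsilon> (tmap \<delta> id y) = lcontr cosep_form y" for y :: "(('c \<times> 'c) \<times> 'c, 'k) vec"
    by (induct y rule: tensor_induct) (simp_all add: cosep_form_def[symmetric])
  then show ?thesis
    using counit_left[of "\<delta> x"] delta_colinear_left[of x] by simp
qed

lemma delta_rcontr: "\<delta> x = rcontr cosep_form (assocR (tmap \<Delta> id x))"
proof -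
  have "rcontr \<epsilon> (tmap id \<delta> y) = rcontr cosep_form y" for y :: "('c \<times> ('c \<times> 'c), 'k) vec"
    by (induct y rule: tensor_induct) (simp_all add: cosep_form_def[symmetric])
  then show ?thesis
    using counit_right[of "\<delta> x"] delta_colinear_right[of x] by simp
qed

end

lemma coseparable_coalgI:
  assumes "coalgebra \<Delta> \<epsilon>" "coseparable \<Delta> \<epsilon>"
  obtains \<delta> where "coseparable_coalg \<Delta> \<epsilon> \<delta>"
proof -
  from assms(2) obtain \<delta> where "linmap \<delta>"
    "\<forall>x. \<Delta> (\<delta> x) = tmap \<delta> id (assocL (tmap id \<Delta> x))"
    "\<forall>x. \<Delta> (\<delta> x) = tmap id \<delta> (assocR (tmap \<Delta> id x))" "\<forall>c. \<delta> (\<Delta> c) = c"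
    unfolding coseparable_def by blast
  with assms(1) have "coseparable_coalg \<Delta> \<epsilon> \<delta>"
    by unfold_locales (simp_all add: coalg_def)
  then show thesis by (rule that)
qed

section \<open>Entwined extensions\<close>

locale entwined_ext = coalg +
  fixes mul :: "('p, 'k::field) vec \<Rightarrow> ('p, 'k) vec \<Rightarrow> ('p, 'k) vec"
    and one :: "('p, 'k) vec"
    and \<psi> :: "('c \<times> 'p, 'k) vec \<Rightarrow> ('p \<times> 'c, 'k) vec"
    and \<rho> :: "('p, 'k) vec \<Rightarrow> ('p \<times> 'c, 'k) vec"
    and e :: "('c, 'k) vec"
  assumes algebra: "algebra mul one"
    and entwining: "entwining mul one \<Delta> \<epsilon> \<psi>"
    and extension: "entw_extension mul \<Delta> \<epsilon> \<psi> \<rho>"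
    and grouplike: "grouplike \<Delta> \<epsilon> e"
    and copointed: "copointed \<psi> \<rho> e"
begin

lemma linmap_mul_left [simp]: "linmap (\<lambda>p. mul p q)"
  using algebra by (simp add: algebra_def)

lemma linmap_mul_right [simp]: "linmap (mul p)"
  using algebra by (simp add: algebra_def)

lemma mul_assoc [simp]: "mul (mul p q) r = mul p (mul q r)"
  using algebra by (simp add: algebra_def)

lemma mul_one_left [simp]: "mul one p = p"
  using algebra by (simp add: algebra_def)

lemma mul_one_right [simp]: "mul p one = p"
  using algebra by (simp add: algebra_def)

lemma mul_add_left [simp]: "mul (p + p') q = mul p q + mul p' q"
  using linmapD[OF linmap_mul_left] by blast

lemma mul_add_right [simp]: "mul p (q + q') = mul p q + mul p q'"
  using linmapD[OF linmap_mul_right] by blast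

lemma mul_sc_left [simp]: "mul (sc c p) q = sc c (mul p q)"
  using linmapD[OF linmap_mul_left] by blast

lemma mul_sc_right [simp]: "mul p (sc c q) = sc c (mul p q)"
  using linmapD[OF linmap_mul_right] by blast

lemma mulmap_tprod_mul [simp]: "mulmap mul (tprod u v) = mul u v"
  by (rule mulmap_tprod) simp_all

lemma mulmap_assocL_tprod: "tmap (mulmap mul) id (assocL (tprod p x)) = tmap (mul p) id x"
  by (induct x rule: tensor_induct) simp_all

lemma tmap_mul_mul: "tmap (mul p) id (tmap (mul q) id x) = tmap (mul (mul p q)) id x"
proof -
  have "linmap (\<lambda>a. mul p (mul q a))"
    by (simp add: linmap_def)
  then show ?thesis
    by (induct x rule: tensor_induct) simp_all
qed

lemma tmap_mul_add [simp]: "tmap (mul (p + q)) id x = tmap (mul p) id x + tmap (mul q) id x"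
  by (induct x rule: tensor_induct) simp_all

lemma tmap_mul_sc [simp]: "tmap (mul (sc c p)) id x = sc c (tmap (mul p) id x)"
  by (induct x rule: tensor_induct) (simp_all add: mult.commute)

lemma tmap_mul_one [simp]: "tmap (mul one) id x = x"
  by (induct x rule: tensor_induct) simp_all

lemma linmap_psi [simp]: "linmap \<psi>"
  using entwining by (simp add: entwining_def)

lemma psi_add [simp]: "\<psi> (x + y) = \<psi> x + \<psi> y"
  using linmapD[OF linmap_psi] by blast

lemma psi_sc [simp]: "\<psi> (sc c x) = sc c (\<psi> x)"
  using linmapD[OF linmap_psi] by blast

lemma psi_tprod_one [simp]: "\<psi> (tprod c one) = tprod one c"
  using entwining by (simp add: entwining_def)

definition ract :: "('p \<times> 'c, 'k) vec \<Rightarrow> ('p, 'k) vec \<Rightarrow> ('p \<times> 'c, 'k) vec" where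
  "ract r q = tmap (mulmap mul) id (assocL (tmap id \<psi> (assocR (tprod r q))))"

lemma ract_add_left [simp]: "ract (x + y) q = ract x q + ract y q"
  by (simp add: ract_def)

lemma ract_add_right [simp]: "ract r (p + q) = ract r p + ract r q"
  by (simp add: ract_def)

lemma ract_sc_left [simp]: "ract (sc c x) q = sc c (ract x q)"
  by (simp add: ract_def)

lemma ract_sc_right [simp]: "ract r (sc c q) = sc c (ract r q)"
  by (simp add: ract_def)

lemma linmap_ract_left [simp]: "linmap (\<lambda>r. ract r q)"
  by (simp add: linmap_def)

lemma linmap_ract_right [simp]: "linmap (ract r)"
  by (simp add: linmap_def)

lemma ract_tprod [simp]: "ract (tprod p c) q = tmap (mul p) id (\<psi> (tprod c q))"
  by (simp add: ract_def mulmap_assocL_tprod)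

lemma ract_tmap_mul: "ract (tmap (mul p) id x) q = tmap (mul p) id (ract x q)"
  by (induct x rule: tensor_induct) (simp_all add: tmap_mul_mul)

lemma psi_mul: "\<psi> (tprod c (mul p q)) = ract (\<psi> (tprod c p)) q"
  using entwining by (simp add: entwining_def ract_def)

lemma ract_ract: "ract (ract x p) q = ract x (mul p q)"
  by (induct x rule: tensor_induct) (simp_all add: ract_tmap_mul psi_mul)

lemma psi_Delta_tprod:
  "tmap id \<Delta> (\<psi> (tprod c p))
    = assocR (tmap \<psi> id (assocL (tmap id \<psi> (assocR (tprod (\<Delta> c) p)))))"
  using entwining by (simp add: entwining_def)

lemma linmap_rho [simp]: "linmap \<rho>"
  using extension by (simp add: entw_extension_def right_comodule_def)

lemma rho_add [simp]: "\<rho> (x + y) = \<rho> x + \<rho> y"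
  using linmapD[OF linmap_rho] by blast

lemma rho_sc [simp]: "\<rho> (sc c x) = sc c (\<rho> x)"
  using linmapD[OF linmap_rho] by blast

lemma rho_coassoc: "tmap \<rho> id (\<rho> p) = assocL (tmap id \<Delta> (\<rho> p))"
  using extension by (simp add: entw_extension_def right_comodule_def)

lemma rho_counit [simp]: "rcontr \<epsilon> (\<rho> p) = p"
  using extension by (simp add: entw_extension_def right_comodule_def)

lemma rho_mul: "\<rho> (mul p q) = ract (\<rho> p) q"
  using extension by (simp add: entw_extension_def ract_def)

lemma Delta_e [simp]: "\<Delta> e = tprod e e"
  using grouplike by (simp add: grouplike_def)

lemma eps_e [simp]: "\<epsilon> e = 1"
  using grouplike by (simp add: grouplike_def)

lemma rho_psi: "\<rho> p = \<psi> (tprod e p)"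
  using copointed by (simp add: copointed_def)

lemma rho_one [simp]: "\<rho> one = tprod one e"
  by (simp add: rho_psi)

abbreviation can :: "('p \<times> 'p, 'k) vec \<Rightarrow> ('p \<times> 'c, 'k) vec" where
  "can \<equiv> cantilde mul \<rho>"

lemma can_add [simp]: "can (x + y) = can x + can y"
  by (simp add: cantilde_def)

lemma can_sc [simp]: "can (sc c x) = sc c (can x)"
  by (simp add: cantilde_def)

lemma linmap_can [simp]: "linmap can"
  by (simp add: linmap_def)

lemma can_tprod [simp]: "can (tprod p q) = tmap (mul p) id (\<rho> q)"
  by (simp add: cantilde_def mulmap_assocL_tprod)

lemma can_mul_left: "can (tmap (mul p) id x) = tmap (mul p) id (can x)"
  by (induct x rule: tensor_induct) (simp_all add: tmap_mul_mul)

lemma can_mul_right: "can (tmap id (\<lambda>q. mul q r) x) = ract (can x) r"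
  by (induct x rule: tensor_induct) (simp_all add: rho_mul ract_tmap_mul)

lemma rcontr_eps_can: "rcontr \<epsilon> (can x) = mulmap mul x"
proof (induct x rule: tensor_induct)
  case (tprod p q)
  show ?case
    by (simp add: rcontr_tmap[of "mul p", symmetric])
qed simp_all

abbreviation B :: "('p, 'k) vec set" where
  "B \<equiv> coinv mul \<rho>"

abbreviation N :: "('p \<times> 'p, 'k) vec set" where
  "N \<equiv> balanced mul B"

abbreviation T :: "('p \<times> 'p, 'k) vec set set" where
  "T \<equiv> tensorB mul B"

lemma subspace_N: "subspace N"
  unfolding balanced_def by (rule subspace_kspan)

lemma can_N: "n \<in> N \<Longrightarrow> can n = 0"
proof -
  assume n: "n \<in> N"
  have "subspace {x. can x = 0}"
    by (simp add: subspace_def linmap_zero[OF linmap_can])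
  moreover have "{tprod (mul p b) q - tprod p (mul b q) | p q b. b \<in> B} \<subseteq> {x. can x = 0}"
    by (auto simp: coinv_def linmap_minus[OF linmap_can] tmap_mul_mul)
  ultimately show ?thesis
    using n kspan_least unfolding balanced_def by blast
qed

lemma canB_coset: "canB mul \<rho> ((\<lambda>n. x + n) ` N) = can x"
proof -
  have "x \<in> (\<lambda>n. x + n) ` N"
    using subspace_N by (force simp: subspace_def)
  then have "(SOME y. y \<in> (\<lambda>n. x + n) ` N) \<in> (\<lambda>n. x + n) ` N"
    by (rule someI)
  then obtain n where "n \<in> N" "(SOME y. y \<in> (\<lambda>n. x + n) ` N) = x + n"
    by blast
  then show ?thesis
    by (simp add: canB_def can_N)
qed

lemma canB_bijI:
  assumes can_sigma: "\<And>w. can (\<sigma> w) = w" and sigma_can: "\<And>x. x - \<sigma> (can x) \<in> N"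
  shows "bij_betw (canB mul \<rho>) T UNIV"
proof (rule bij_betwI')
  fix X Y assume "X \<in> T" "Y \<in> T"
  then obtain x y where x: "X = (\<lambda>n. x + n) ` N" and y: "Y = (\<lambda>n. y + n) ` N"
    by (auto simp: tensorB_def)
  show "(canB mul \<rho> X = canB mul \<rho> Y) = (X = Y)"
  proof
    assume "canB mul \<rho> X = canB mul \<rho> Y"
    then have "can x = can y"
      by (simp add: x y canB_coset)
    then have "x - y \<in> N"
      using subspace_diff[OF subspace_N sigma_can[of x] sigma_can[of y]] by simp
    then show "X = Y"
      unfolding x y by (rule subspace_coset_eq[OF subspace_N])
  qed simp
next
  fix w :: "('p \<times> 'c, 'k) vec"
  have "(\<lambda>n. \<sigma> w + n) ` N \<in> T"
    by (simp add: tensorB_def)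
  moreover have "canB mul \<rho> ((\<lambda>n. \<sigma> w + n) ` N) = w"
    by (simp add: canB_coset can_sigma)
  ultimately show "\<exists>X\<in>T. w = canB mul \<rho> X"
    by metis
qed simp

lemma balanced_columns:
  assumes "\<And>j. col j t \<in> B"
  shows "tprod p (mulmap mul t) - tmap (mul p) id t \<in> N"
proof -
  let ?J = "snd ` Poly_Mapping.keys t"
  let ?t = "\<lambda>j. col j t"
  have t: "t = (\<Sum>j\<in>?J. tprod (?t j) (bas j))"
    by (rule col_decomp)
  have "mulmap mul t = (\<Sum>j\<in>?J. mul (?t j) (bas j))"
    using arg_cong[OF t, of "mulmap mul"]
    by (simp only: linmap_sum[OF linmap_mulmap] mulmap_tprod_mul)
  moreover have "tmap (mul p) id t = (\<Sum>j\<in>?J. tprod (mul p (?t j)) (bas j))"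
    using arg_cong[OF t, of "tmap (mul p) id"]
    by (simp only: linmap_sum[OF linmap_tmap] tmap_tprod[OF linmap_mul_right linmap_id] id_apply)
  ultimately have "tprod p (mulmap mul t) - tmap (mul p) id t
      = (\<Sum>j\<in>?J. tprod p (mul (?t j) (bas j))) - (\<Sum>j\<in>?J. tprod (mul p (?t j)) (bas j))"
    by (simp only: linmap_sum[OF linmap_tprod2])
  also have "\<dots> = (\<Sum>j\<in>?J. tprod p (mul (?t j) (bas j)) - tprod (mul p (?t j)) (bas j))"
    by (rule sum_subtractf[symmetric])
  also have "\<dots> = (\<Sum>j\<in>?J. - (tprod (mul p (?t j)) (bas j) - tprod p (mul (?t j) (bas j))))"
    by (rule sum.cong) (simp_all only: minus_diff_eq)
  also have "\<dots> \<in> N"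
  proof (rule subspace_sum[OF subspace_N], rule subspace_uminus[OF subspace_N])
    fix j
    have "tprod (mul p (?t j)) (bas j) - tprod p (mul (?t j) (bas j))
        \<in> {tprod (mul p b) q - tprod p (mul b q) | p q b. b \<in> B}"
      by (rule CollectI, rule exI[of _ p], rule exI[of _ "bas j"], rule exI[of _ "?t j"])
        (simp add: assms)
    then show "tprod (mul p (?t j)) (bas j) - tprod p (mul (?t j) (bas j)) \<in> N"
      unfolding balanced_def by (rule subsetD[OF kspan_superset])
  qed
  finally show ?thesis .
qed

lemma psican_eq_psi:
  assumes "bij_betw (canB mul \<rho>) T UNIV"
  shows "psican mul one \<rho> = \<psi>"
proof
  fix x
  have inv: "can (tmap id (\<lambda>q. mul q (bas j))
        (SOME x. x \<in> inv_into T (canB mul \<rho>) (tprod one (bas i))))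
      = \<psi> (tprod (bas i) (bas j))" for i j
  proof -
    have "tprod one (bas i) \<in> canB mul \<rho> ` T"
      using assms by (simp add: bij_betw_def)
    then have "canB mul \<rho> (inv_into T (canB mul \<rho>) (tprod one (bas i))) = tprod one (bas i)"
      by (rule f_inv_into_f)
    then show ?thesis
      by (simp add: canB_def can_mul_right)
  qed
  have "psican mul one \<rho> x = lext (\<lambda>k. \<psi> (bas k)) x"
    unfolding psican_def
    by (rule arg_cong[where f = "\<lambda>g. lext g x"])
      (auto simp: inv simp del: bas_pair simp add: tprod_bas)
  also have "\<dots> = \<psi> x"
    by (rule linmap_expand) simp
  finally show "psican mul one \<rho> x = \<psi> x" .
qed

end

locale entwined_ext_bij = entwined_ext \<Delta> \<epsilon> mul one \<psi> \<rho> e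
  for \<Delta> :: "('c, 'k::field) vec \<Rightarrow> ('c \<times> 'c, 'k) vec" and \<epsilon>
    and mul :: "('p, 'k) vec \<Rightarrow> ('p, 'k) vec \<Rightarrow> ('p, 'k) vec" and one \<psi> \<rho> e +
  assumes bij_psi: "bij \<psi>"
begin

lemma psi_inv [simp]: "\<psi> (inv \<psi> x) = x"
  using bij_psi by (simp add: bij_def surj_f_inv_f)

lemma inv_psi [simp]: "inv \<psi> (\<psi> x) = x"
  using bij_psi by (simp add: bij_def)

lemma psi_inj: "\<psi> x = \<psi> y \<Longrightarrow> x = y"
  using bij_psi by (simp add: bij_def inj_def)

lemma inv_psi_add [simp]: "inv \<psi> (x + y) = inv \<psi> x + inv \<psi> y"
  by (rule psi_inj) simp

lemma inv_psi_sc [simp]: "inv \<psi> (sc c x) = sc c (inv \<psi> x)"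
  by (rule psi_inj) simp

lemma linmap_inv_psi [simp]: "linmap (inv \<psi>)"
  by (simp add: linmap_def)

lemma inv_psi_tprod_one [simp]: "inv \<psi> (tprod one c) = tprod c one"
  by (rule psi_inj) simp

definition lcoact :: "('p, 'k) vec \<Rightarrow> ('c \<times> 'p, 'k) vec" where
  "lcoact p = inv \<psi> (tprod p e)"

lemma lcoact_add [simp]: "lcoact (x + y) = lcoact x + lcoact y"
  by (simp add: lcoact_def)

lemma lcoact_sc [simp]: "lcoact (sc c x) = sc c (lcoact x)"
  by (simp add: lcoact_def)

lemma linmap_lcoact [simp]: "linmap lcoact"
  by (simp add: linmap_def)

lemma psi_lcoact [simp]: "\<psi> (lcoact p) = tprod p e"
  by (simp add: lcoact_def)

lemma lcoact_one [simp]: "lcoact one = tprod e one"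
  by (rule psi_inj) simp

definition psi2 :: "(('c \<times> 'c) \<times> 'p, 'k) vec \<Rightarrow> ('p \<times> ('c \<times> 'c), 'k) vec" where
  "psi2 x = assocR (tmap \<psi> id (assocL (tmap id \<psi> (assocR x))))"

lemma psi2_inj: "psi2 x = psi2 y \<Longrightarrow> x = y"
proof -
  have inv1: "tmap (inv \<psi>) id (tmap \<psi> id z) = z" for z :: "(('c \<times> 'p) \<times> 'c, 'k) vec"
    by (induct z rule: tensor_induct) simp_all
  have inv2: "tmap id (inv \<psi>) (tmap id \<psi> z) = z" for z :: "('c \<times> ('c \<times> 'p), 'k) vec"
    by (induct z rule: tensor_induct) simp_all
  assume "psi2 x = psi2 y"
  then have "assocL (tmap id (inv \<psi>) (assocR (tmap (inv \<psi>) id (assocL (psi2 x)))))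
      = assocL (tmap id (inv \<psi>) (assocR (tmap (inv \<psi>) id (assocL (psi2 y)))))"
    by simp
  then show "x = y"
    by (simp add: psi2_def inv1 inv2)
qed

lemma psi_Delta: "tmap id \<Delta> (\<psi> x) = psi2 (tmap \<Delta> id x)"
  by (induct x rule: tensor_induct) (simp_all add: psi_Delta_tprod psi2_def)

lemma lcoact_coassoc: "tmap \<Delta> id (lcoact p) = assocL (tmap id lcoact (lcoact p))"
proof (rule psi2_inj)
  have "linmap (\<lambda>q. tprod q e)"
    by simp
  then have "tmap id \<psi> (tmap id lcoact y) = tmap id (\<lambda>q. tprod q e) y"
    and "assocL (tmap id (\<lambda>q. tprod q e) y) = tprod y e" for y :: "('c \<times> 'p, 'k) vec"
    by (induct y rule: tensor_induct) simp_all
  then have "psi2 (assocL (tmap id lcoact (lcoact p))) = tprod p (tprod e e)"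
    by (simp add: psi2_def)
  then show "psi2 (tmap \<Delta> id (lcoact p)) = psi2 (assocL (tmap id lcoact (lcoact p)))"
    by (simp add: psi_Delta[symmetric])
qed

lemma lcoact_coassoc': "tmap id lcoact (lcoact p) = assocR (tmap \<Delta> id (lcoact p))"
  by (simp add: lcoact_coassoc)

end

section \<open>A strong connection makes the canonical map bijective\<close>

locale strong_conn_ext = entwined_ext_bij \<Delta> \<epsilon> mul one \<psi> \<rho> e
  for \<Delta> :: "('c, 'k::field) vec \<Rightarrow> ('c \<times> 'c, 'k) vec" and \<epsilon>
    and mul :: "('p, 'k) vec \<Rightarrow> ('p, 'k) vec \<Rightarrow> ('p, 'k) vec" and one \<psi> \<rho> e +
  fixes ell :: "('c, 'k) vec \<Rightarrow> ('p \<times> 'p, 'k) vec"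
  assumes strong_connection: "strong_connection mul one \<Delta> \<rho> \<psi> e ell"
begin

lemma linmap_ell [simp]: "linmap ell"
  using strong_connection by (simp add: strong_connection_def)

lemma ell_add [simp]: "ell (x + y) = ell x + ell y"
  using linmapD[OF linmap_ell] by blast

lemma ell_sc [simp]: "ell (sc c x) = sc c (ell x)"
  using linmapD[OF linmap_ell] by blast

lemma can_ell [simp]: "can (ell c) = tprod one c"
  using strong_connection by (simp add: strong_connection_def)

lemma ell_left_colinear: "tmap lcoact id (ell c) = assocL (tmap id ell (\<Delta> c))"
  using strong_connection by (simp add: strong_connection_def lcoact_def[abs_def])

lemma mulmap_ell: "mulmap mul (ell c) = sc (\<epsilon> c) one"
  using rcontr_eps_can[of "ell c"] by simp

definition sect :: "('p \<times> 'c, 'k) vec \<Rightarrow> ('p \<times> 'p, 'k) vec" where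
  "sect w = tmap (mulmap mul) id (assocL (tmap id ell w))"

lemma sect_add [simp]: "sect (x + y) = sect x + sect y"
  by (simp add: sect_def)

lemma sect_sc [simp]: "sect (sc c x) = sc c (sect x)"
  by (simp add: sect_def)

lemma linmap_sect [simp]: "linmap sect"
  by (simp add: linmap_def)

lemma sect_tprod [simp]: "sect (tprod p c) = tmap (mul p) id (ell c)"
  by (simp add: sect_def mulmap_assocL_tprod)

lemma can_sect: "can (sect w) = w"
  by (induct w rule: tensor_induct) (simp_all add: can_mul_left)

lemma sect_mul_left: "sect (tmap (mul p) id w) = tmap (mul p) id (sect w)"
  by (induct w rule: tensor_induct) (simp_all add: tmap_mul_mul)

lemma mulmap_mul_left: "mulmap mul (tmap (mul p) id x) = mul p (mulmap mul x)"
  by (induct x rule: tensor_induct) simp_all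

lemma mulmap_sect: "mulmap mul (sect w) = rcontr \<epsilon> w"
  by (induct w rule: tensor_induct) (simp_all add: mulmap_mul_left mulmap_ell)

lemma linmap_right_mul_compositions [simp]:
  "linmap (\<lambda>u. \<rho> (mul u r))"
  "linmap (\<lambda>u. tmap (mul u) id (\<rho> r))"
  "linmap (\<lambda>u. ract x (mul u r))"
  "linmap (\<lambda>u. \<psi> (tprod d (mul u r)))"
  "linmap (\<lambda>u. tmap (mul a) id (\<psi> (tprod d (mul u r))))"
  "linmap (\<lambda>u. ract (\<rho> u) r)"
  "linmap (\<lambda>u. ract (\<psi> (tprod d u)) r)"
  by (simp_all add: linmap_def)

definition lmul1 :: "('p \<times> (('p \<times> 'c) \<times> 'p), 'k) vec \<Rightarrow> (('p \<times> 'c) \<times> 'p, 'k) vec" where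
  "lmul1 Z = tmap (tmap (mulmap mul) id) id (tmap assocL id (assocL Z))"

lemma lmul1_add [simp]: "lmul1 (x + y) = lmul1 x + lmul1 y"
  by (simp add: lmul1_def)

lemma lmul1_sc [simp]: "lmul1 (sc c x) = sc c (lmul1 x)"
  by (simp add: lmul1_def)

lemma lmul1_tprod: "lmul1 (tprod a X) = tmap (tmap (mul a) id) id X"
  by (induct X rule: tensor_induct) (simp_all add: lmul1_def mulmap_assocL_tprod)

definition twist :: "('p, 'k) vec \<Rightarrow> ('c \<times> 'c, 'k) vec \<Rightarrow> (('p \<times> 'c) \<times> 'p, 'k) vec" where
  "twist r x = lext (\<lambda>(i, j). tmap (\<lambda>u. \<psi> (tprod (bas i) (mul u r))) id (ell (bas j))) x"

lemma twist_add [simp]: "twist r (x + y) = twist r x + twist r y"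
  by (simp add: twist_def)

lemma twist_sc [simp]: "twist r (sc c x) = sc c (twist r x)"
  by (simp add: twist_def)

lemma linmap_twist [simp]: "linmap (twist r)"
  by (simp add: linmap_def)

lemma twist_tprod: "twist r (tprod d c) = tmap (\<lambda>u. \<psi> (tprod d (mul u r))) id (ell c)"
proof -
  have "tmap (\<lambda>u. \<psi> (tprod (d + d') (mul u r))) id W
      = tmap (\<lambda>u. \<psi> (tprod d (mul u r))) id W + tmap (\<lambda>u. \<psi> (tprod d' (mul u r))) id W"
    and "tmap (\<lambda>u. \<psi> (tprod (sc c d) (mul u r))) id W
      = sc c (tmap (\<lambda>u. \<psi> (tprod d (mul u r))) id W)" for d d' c W
    by (induct W rule: tensor_induct) (simp_all add: mult.commute)
  then have l1: "linmap (\<lambda>d. tmap (\<lambda>u. \<psi> (tprod d (mul u r))) id W)" for W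
    by (simp add: linmap_def)
  have l2: "linmap (\<lambda>c. tmap (\<lambda>u. \<psi> (tprod d (mul u r))) id (ell c))" for d
    by (simp add: linmap_def)
  show ?thesis
    unfolding twist_def by (simp add: linmap_expand[OF l2] linmap_expand[OF l1] del: bas_pair)
qed

text \<open>Left colinearity of \<open>\<ell>\<close> gives \<open>\<psi>(c\<^sub>1 \<otimes> \<ell>(c\<^sub>2)\<^sup>1 r) \<otimes> \<ell>(c\<^sub>2)\<^sup>2 = \<ell>(c)\<^sup>1 \<rho>(r) \<otimes> \<ell>(c)\<^sup>2\<close>.\<close>
lemma twist_Delta: "twist r (\<Delta> c) = tmap (\<lambda>u. tmap (mul u) id (\<rho> r)) id (ell c)"
proof -
  have "twist r x = tmap (\<lambda>y. ract y r) id (tmap \<psi> id (assocL (tmap id ell x)))" for x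
  proof (induct x rule: tensor_induct)
    case (tprod d c)
    have "tmap (\<lambda>u. \<psi> (tprod d (mul u r))) id t
        = tmap (\<lambda>y. ract y r) id (tmap \<psi> id (assocL (tprod d t)))" for t
      by (induct t rule: tensor_induct) (simp_all add: psi_mul)
    then show ?case
      by (simp add: twist_tprod)
  qed simp_all
  moreover have "tmap (\<lambda>y. ract y r) id (tmap \<psi> id (tmap lcoact id t))
      = tmap (\<lambda>u. tmap (mul u) id (\<rho> r)) id t" for t
    by (induct t rule: tensor_induct) (simp_all add: rho_psi[symmetric])
  ultimately show ?thesis
    by (simp add: ell_left_colinear[symmetric])
qed

lemma rmul_sect: "tmap (\<lambda>u. \<rho> (mul u r)) id (sect w)
    = lmul1 (tmap id (twist r) (assocR (tmap \<rho> id w)))"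
proof (induct w rule: tensor_induct)
  case (tprod a c)
  have rho_mul_legs: "tmap (\<lambda>u. \<rho> (mul u r)) id (tmap (mul a) id W)
      = tmap (\<lambda>u. ract (\<rho> a) (mul u r)) id W" for W
    by (induct W rule: tensor_induct) (simp_all add: rho_mul ract_ract)
  have ract_legs: "tmap (\<lambda>u. ract y (mul u r)) id (ell c)
      = lmul1 (tmap id (twist r) (assocR (tprod y c)))"
    for y :: "('p \<times> 'c, 'k) vec"
  proof (induct y rule: tensor_induct)
    case (tprod a d)
    have "tmap (\<lambda>u. ract (tprod a d) (mul u r)) id W
        = tmap (tmap (mul a) id) id (tmap (\<lambda>u. \<psi> (tprod d (mul u r))) id W)" for W
      by (induct W rule: tensor_induct) simp_all
    then show ?case
      by (simp add: lmul1_tprod twist_tprod)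
  qed simp_all
  have "tmap \<rho> id (tprod a c) = tprod (\<rho> a) c"
    by simp
  then show ?case
    by (simp only: sect_tprod rho_mul_legs ract_legs)
qed simp_all

lemma rho_rmul_sect:
  "tmap (\<lambda>u. tmap (mul u) id (\<rho> r)) id (sect w)
    = lmul1 (tmap id (\<lambda>c. tmap (\<lambda>u. tmap (mul u) id (\<rho> r)) id (ell c)) w)"
proof (induct w rule: tensor_induct)
  case (tprod a c)
  have "tmap (\<lambda>u. tmap (mul u) id (\<rho> r)) id (tmap (mul a) id W)
      = tmap (tmap (mul a) id) id (tmap (\<lambda>u. tmap (mul u) id (\<rho> r)) id W)" for W
    by (induct W rule: tensor_induct) (simp_all add: tmap_mul_mul)
  moreover have "linmap (\<lambda>c. tmap (\<lambda>u. tmap (mul u) id (\<rho> r)) id (ell c))"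
    by (simp add: linmap_def)
  ultimately show ?case
    by (simp add: lmul1_tprod)
qed simp_all

lemma sect_rho_coinv:
  "tmap (\<lambda>u. \<rho> (mul u r)) id (sect (\<rho> q)) = tmap (\<lambda>u. tmap (mul u) id (\<rho> r)) id (sect (\<rho> q))"
proof -
  have "linmap (\<lambda>c. tmap (\<lambda>u. tmap (mul u) id (\<rho> r)) id (ell c))"
    by (simp add: linmap_def)
  then have twist_legs: "tmap id (twist r) (tmap id \<Delta> W)
      = tmap id (\<lambda>c. tmap (\<lambda>u. tmap (mul u) id (\<rho> r)) id (ell c)) W" for W
    by (induct W rule: tensor_induct) (simp_all add: twist_Delta)
  have "assocR (tmap \<rho> id (\<rho> q)) = tmap id \<Delta> (\<rho> q)"
    by (simp add: rho_coassoc)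
  then show ?thesis
    by (simp only: rmul_sect rho_rmul_sect twist_legs)
qed

lemma col_sect_rho: "col j (sect (\<rho> q)) \<in> B"
  unfolding coinv_def
proof clarify
  fix r
  show "\<rho> (mul (col j (sect (\<rho> q))) r) = tmap (mul (col j (sect (\<rho> q)))) id (\<rho> r)"
    using col_tmap[of "\<lambda>u. \<rho> (mul u r)" j "sect (\<rho> q)"]
      col_tmap[of "\<lambda>u. tmap (mul u) id (\<rho> r)" j "sect (\<rho> q)"] sect_rho_coinv[of r q]
    by simp
qed

text \<open>\<open>p \<otimes> q \<equiv> p q\<^sub>0 \<ell>(q\<^sub>1)\<^sup>1 \<otimes> \<ell>(q\<^sub>1)\<^sup>2\<close> modulo \<open>N\<close>, because \<open>q = q\<^sub>0 \<ell>(q\<^sub>1)\<^sup>1 \<ell>(q\<^sub>1)\<^sup>2\<close>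
  and the first legs \<open>q\<^sub>0 \<ell>(q\<^sub>1)\<^sup>1\<close> lie in \<open>B\<close>.\<close>
lemma sect_can: "x - sect (can x) \<in> N"
proof (induct x rule: tensor_induct)
  case (tprod p q)
  have "tprod p (mulmap mul (sect (\<rho> q))) - tmap (mul p) id (sect (\<rho> q)) \<in> N"
    by (rule balanced_columns) (rule col_sect_rho)
  then show ?case
    by (simp add: sect_mul_left mulmap_sect)
next
  case (add x y)
  then have "(x - sect (can x)) + (y - sect (can y)) \<in> N"
    using subspace_N by (simp add: subspace_def)
  then show ?case
    by (simp add: algebra_simps)
next
  case (sc c x)
  then have "sc c (x - sect (can x)) \<in> N"
    using subspace_N by (simp add: subspace_def)
  then show ?case
    by (simp add: sc_minus)
qed

theorem canB_bij: "bij_betw (canB mul \<rho>) T UNIV"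
  using can_sect sect_can by (rule canB_bijI)

end

section \<open>A strong connection from coseparability and a colifting\<close>

lemma linfun_dual_exists:
  assumes "v \<noteq> (0 :: ('a, 'k::field) vec)"
  shows "\<exists>\<phi>. linfun \<phi> \<and> \<phi> v = 1"
proof -
  obtain k where "Poly_Mapping.lookup v k \<noteq> 0"
    using assms by (metis lookup_zero poly_mapping_eqI)
  then show ?thesis
    by (intro exI[of _ "\<lambda>w. Poly_Mapping.lookup w k / Poly_Mapping.lookup v k"])
      (simp add: linfun_def lookup_add add_divide_distrib)
qed

locale colifted_ext = entwined_ext \<Delta> \<epsilon> mul one \<psi> \<rho> e + coseparable_coalg \<Delta> \<epsilon> \<delta>
  for \<Delta> :: "('c, 'k::field) vec \<Rightarrow> ('c \<times> 'c, 'k) vec" and \<epsilon>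
    and mul :: "('p, 'k) vec \<Rightarrow> ('p, 'k) vec \<Rightarrow> ('p, 'k) vec" and one \<psi> \<rho> e \<delta> +
  fixes \<tau> :: "('c, 'k) vec \<Rightarrow> ('p \<times> 'p, 'k) vec"
  assumes colifting: "colifting mul one \<rho> \<tau>"
begin

lemma linmap_tau [simp]: "linmap \<tau>"
  using colifting by (simp add: colifting_def)

lemma can_tau: "can (\<tau> c) = tprod one c"
  using colifting by (simp add: colifting_def)

definition e_dual :: "('c, 'k) vec \<Rightarrow> 'k" where
  "e_dual = (SOME \<phi>. linfun \<phi> \<and> \<phi> e = 1)"

lemma
  shows linfun_e_dual: "linfun e_dual"
    and e_dual_e: "e_dual e = 1"
proof -
  have "e \<noteq> 0"
    using eps_e linfun_zero[OF linfun_eps] by force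
  then have "linfun e_dual \<and> e_dual e = 1"
    unfolding e_dual_def by (rule someI_ex[OF linfun_dual_exists])
  then show "linfun e_dual" "e_dual e = 1"
    by simp_all
qed

text \<open>The colifting corrected by a multiple of \<open>1 \<otimes> 1 - \<tau>(e)\<close>, which \<open>can\<close> kills, so that it
  sends \<open>e\<close> to \<open>1 \<otimes> 1\<close>.\<close>
definition ntau :: "('c, 'k) vec \<Rightarrow> ('p \<times> 'p, 'k) vec" where
  "ntau c = \<tau> c + sc (e_dual c) (tprod one one - \<tau> e)"

lemma ntau_add [simp]: "ntau (x + y) = ntau x + ntau y"
  by (simp add: ntau_def linmapD[OF linmap_tau] linfunD[OF linfun_e_dual] sc_add_left)

lemma ntau_sc [simp]: "ntau (sc c x) = sc c (ntau x)"
  by (simp add: ntau_def linmapD[OF linmap_tau] linfunD[OF linfun_e_dual])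

lemma linmap_ntau [simp]: "linmap ntau"
  by (simp add: linmap_def)

lemma ntau_e [simp]: "ntau e = tprod one one"
  by (simp add: ntau_def e_dual_e)

lemma can_ntau [simp]: "can (ntau c) = tprod one c"
  by (simp add: ntau_def can_tau linmap_minus[OF linmap_can])

definition ravg :: "('p \<times> 'c, 'k) vec \<Rightarrow> ('p, 'k) vec" where
  "ravg z = rcontr cosep_form (assocR (tmap \<rho> id z))"

lemma ravg_add [simp]: "ravg (x + y) = ravg x + ravg y"
  by (simp add: ravg_def)

lemma ravg_sc [simp]: "ravg (sc c x) = sc c (ravg x)"
  by (simp add: ravg_def)

lemma linmap_ravg [simp]: "linmap ravg"
  by (simp add: linmap_def)

lemma ravg_tprod: "ravg (tprod p c) = rcontr cosep_form (assocR (tprod (\<rho> p) c))"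
  by (simp add: ravg_def)

lemma rho_ravg: "\<rho> (ravg z) = tmap id \<delta> (assocR (tmap \<rho> id z))"
proof (induct z rule: tensor_induct)
  case (tprod p c)
  have rho_rcontr: "\<rho> (rcontr cosep_form x) = rcontr cosep_form (tmap \<rho> id x)" for x
    by (induct x rule: tensor_induct) simp_all
  have rho_assocR: "tmap \<rho> id (assocR (tprod y c)) = assocR (tprod (tmap \<rho> id y) c)" for y
    by (induct y rule: tensor_induct) simp_all
  have contr_assocL: "rcontr cosep_form (assocR (tprod (assocL (tprod q w)) c))
      = tprod q (rcontr cosep_form (assocR (tprod w c)))" for q w
    by (induct w rule: tensor_induct) simp_all
  have "rcontr cosep_form (assocR (tprod (assocL (tmap id \<Delta> y)) c))
      = tmap id \<delta> (assocR (tprod y c))" for y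
    by (induct y rule: tensor_induct) (simp_all add: contr_assocL delta_rcontr[of "tprod _ c"])
  then show ?case
    by (simp add: ravg_tprod rho_rcontr rho_assocR rho_coassoc)
qed simp_all

lemma ravg_colinear: "\<rho> (ravg z) = tmap ravg id (assocL (tmap id \<Delta> z))"
proof (induct z rule: tensor_induct)
  case (tprod p c)
  have lin: "linmap (\<lambda>w. rcontr cosep_form (assocR w))"
    by (simp add: linmap_def)
  have ravg_legs: "tmap ravg id (assocL (tprod p X))
      = tmap (\<lambda>w. rcontr cosep_form (assocR w)) id (assocL (tprod (\<rho> p) X))" for X
    by (induct X rule: tensor_induct) (simp_all add: ravg_tprod lin)
  have contr_tprod: "tmap (\<lambda>w. rcontr cosep_form (assocR w)) id (assocL (tprod (tprod q d) X))
      = tprod q (lcontr cosep_form (assocL (tprod d X)))" for q d X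
    by (induct X rule: tensor_induct) (simp_all add: lin)
  have delta_legs: "tmap (\<lambda>w. rcontr cosep_form (assocR w)) id (assocL (tprod y (\<Delta> c)))
      = tmap id \<delta> (assocR (tprod y c))" for y
    by (induct y rule: tensor_induct) (simp_all add: lin contr_tprod delta_lcontr[of "tprod _ c"])
  show ?case
    by (simp add: rho_ravg ravg_legs delta_legs)
qed simp_all

definition ell_r :: "('c, 'k) vec \<Rightarrow> ('p \<times> 'p, 'k) vec" where
  "ell_r c = tmap id ravg (assocR (tmap ntau id (\<Delta> c)))"

lemma ell_r_add [simp]: "ell_r (x + y) = ell_r x + ell_r y"
  by (simp add: ell_r_def)

lemma ell_r_sc [simp]: "ell_r (sc c x) = sc c (ell_r x)"
  by (simp add: ell_r_def)

lemma linmap_ell_r [simp]: "linmap ell_r"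
  by (simp add: linmap_def)

lemma ell_r_e [simp]: "ell_r e = tprod one one"
  using cosep_form_Delta[of e] by (simp add: ell_r_def ravg_tprod)

lemma can_ell_r: "can (ell_r c) = tprod one c"
proof -
  have mul_delta: "tmap (mul a) id (tmap id \<delta> (assocR (tprod y d)))
      = tmap id \<delta> (assocR (tprod (tmap (mul a) id y) d))" for a y d
    by (induct y rule: tensor_induct) simp_all
  have can_ravg_tprod: "can (tmap id ravg (assocR (tprod t d)))
      = tmap id \<delta> (assocR (tprod (can t) d))"
    for t d
    by (induct t rule: tensor_induct) (simp_all add: rho_ravg mul_delta)
  have can_ravg: "can (tmap id ravg (assocR x)) = tmap id \<delta> (assocR (tmap can id x))" for x
    by (induct x rule: tensor_induct) (simp_all add: can_ravg_tprod)
  have can_ntau_legs: "tmap can id (tmap ntau id w) = tmap (tprod one) id w" for w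
    by (induct w rule: tensor_induct) simp_all
  have one_legs: "assocR (tmap (tprod one) id w) = tprod one w" for w :: "('c \<times> 'c, 'k) vec"
    by (induct w rule: tensor_induct) simp_all
  show ?thesis
    by (simp add: ell_r_def can_ravg can_ntau_legs one_legs)
qed

lemma ell_r_colinear: "tmap id \<rho> (ell_r c) = assocR (tmap ell_r id (\<Delta> c))"
proof -
  let ?R = "\<lambda>z. tmap id ravg (assocR z)"
  have lin: "linmap ?R"
    by (simp add: linmap_def)
  have ravg_tprod_legs: "tprod p (tmap ravg id (assocL (tprod q X)))
      = assocR (tmap ?R id (assocL (tprod (tprod p q) X)))" for p q X
    by (induct X rule: tensor_induct) (simp_all add: lin)
  have rho_ravg_legs: "tmap id \<rho> (tmap id ravg (assocR (tprod t d)))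
      = assocR (tmap ?R id (assocL (tprod t (\<Delta> d))))" for t d
    by (induct t rule: tensor_induct) (simp_all add: ravg_colinear ravg_tprod_legs lin)
  have ntau_legs: "assocL (tprod (ntau a) X) = tmap (tmap ntau id) id (assocL (tprod a X))" for a X
    by (induct X rule: tensor_induct) simp_all
  have rho_ell_r_legs: "tmap id \<rho> (tmap id ravg (assocR (tmap ntau id w)))
      = assocR (tmap ?R id (tmap (tmap ntau id) id (assocL (tmap id \<Delta> w))))" for w
    by (induct w rule: tensor_induct) (simp_all add: lin rho_ravg_legs ntau_legs)
  have ell_r_legs: "assocR (tmap ?R id (tmap (tmap ntau id) id (tmap \<Delta> id x)))
      = assocR (tmap ell_r id x)"
    for x
    by (induct x rule: tensor_induct) (simp_all add: lin ell_r_def[symmetric])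
  show ?thesis
    unfolding ell_r_def[of c] rho_ell_r_legs coassoc ell_r_legs ..
qed

end

locale colifted_ext_bij = colifted_ext \<Delta> \<epsilon> mul one \<psi> \<rho> e \<delta> \<tau>
  for \<Delta> :: "('c, 'k::field) vec \<Rightarrow> ('c \<times> 'c, 'k) vec" and \<epsilon>
    and mul :: "('p, 'k) vec \<Rightarrow> ('p, 'k) vec \<Rightarrow> ('p, 'k) vec" and one \<psi> \<rho> e \<delta> \<tau> +
  assumes bij_psi: "bij \<psi>"

sublocale colifted_ext_bij \<subseteq> entwined_ext_bij \<Delta> \<epsilon> mul one \<psi> \<rho> e
  by unfold_locales (rule bij_psi)

context colifted_ext_bij
begin

definition lavg :: "('c \<times> 'p, 'k) vec \<Rightarrow> ('p, 'k) vec" where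
  "lavg w = lcontr cosep_form (assocL (tmap id lcoact w))"

lemma lavg_add [simp]: "lavg (x + y) = lavg x + lavg y"
  by (simp add: lavg_def)

lemma lavg_sc [simp]: "lavg (sc c x) = sc c (lavg x)"
  by (simp add: lavg_def)

lemma linmap_lavg [simp]: "linmap lavg"
  by (simp add: linmap_def)

lemma lavg_tprod: "lavg (tprod d p) = lcontr cosep_form (assocL (tprod d (lcoact p)))"
  by (simp add: lavg_def)

lemma lcoact_lavg: "lcoact (lavg w) = tmap id lavg (assocR (tmap \<Delta> id w))"
proof (induct w rule: tensor_induct)
  case (tprod d p)
  have lcoact_lcontr: "lcoact (lcontr cosep_form x) = lcontr cosep_form (tmap id lcoact x)" for x
    by (induct x rule: tensor_induct) simp_all
  have lcoact_legs: "tmap id lcoact (assocL (tprod d s))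
      = assocL (tprod d (tmap id lcoact s))" for s
    by (induct s rule: tensor_induct) simp_all
  have contr_tprod: "lcontr cosep_form (assocL (tprod d (assocR (tprod W q))))
      = tprod (lcontr cosep_form (assocL (tprod d W))) q" for W q
    by (induct W rule: tensor_induct) simp_all
  have contr_Delta: "lcontr cosep_form (assocL (tprod d (assocR (tmap \<Delta> id s))))
      = tmap \<delta> id (assocL (tprod d s))" for s
    by (induct s rule: tensor_induct) (simp_all add: contr_tprod delta_lcontr[of "tprod d _"])
  have lavg_legs: "tmap id lavg (assocR (tprod X y))
      = tmap id (lcontr cosep_form) (tmap id assocL (assocR (tprod X (lcoact y))))" for X y
    by (induct X rule: tensor_induct) (simp_all add: lavg_tprod)
  have contr_tprod': "tmap id (lcontr cosep_form) (tmap id assocL (assocR (tprod W (tprod c q))))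
      = tprod (rcontr cosep_form (assocR (tprod W c))) q" for W c q
    by (induct W rule: tensor_induct) simp_all
  have contr_Delta': "tmap id (lcontr cosep_form) (tmap id assocL (assocR (tprod (\<Delta> d) s)))
      = tmap \<delta> id (assocL (tprod d s))" for s
    by (induct s rule: tensor_induct) (simp_all add: contr_tprod' delta_rcontr[of "tprod d _"])
  show ?case
    by (simp add: lavg_tprod lcoact_lcontr lcoact_legs lcoact_coassoc' contr_Delta lavg_legs
        contr_Delta')
qed simp_all

text \<open>\<open>\<ell>(c) = lavg(c\<^sub>1 \<otimes> \<ell>\<^sub>r(c\<^sub>2)\<^sup>1) \<otimes> \<ell>\<^sub>r(c\<^sub>2)\<^sup>2\<close>: averaging on the left keeps right colinearity
  and adds left colinearity.\<close>
definition ell :: "('c, 'k) vec \<Rightarrow> ('p \<times> 'p, 'k) vec" where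
  "ell c = tmap lavg id (assocL (tmap id ell_r (\<Delta> c)))"

lemma ell_add [simp]: "ell (x + y) = ell x + ell y"
  by (simp add: ell_def)

lemma ell_sc [simp]: "ell (sc c x) = sc c (ell x)"
  by (simp add: ell_def)

lemma linmap_ell [simp]: "linmap ell"
  by (simp add: linmap_def)

lemma ell_e: "ell e = tprod one one"
  using cosep_form_Delta[of e] by (simp add: ell_def lavg_tprod)

definition lcan :: "('p \<times> 'p, 'k) vec \<Rightarrow> ('c \<times> ('p \<times> 'c), 'k) vec" where
  "lcan t = tmap id can (assocR (tmap lcoact id t))"

lemma lcan_add [simp]: "lcan (x + y) = lcan x + lcan y"
  by (simp add: lcan_def)

lemma lcan_sc [simp]: "lcan (sc c x) = sc c (lcan x)"
  by (simp add: lcan_def)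

lemma linmap_lcan [simp]: "linmap lcan"
  by (simp add: linmap_def)

lemma psi_lcan: "tmap \<psi> id (assocL (lcan t)) = assocL (tmap id \<Delta> (can t))"
proof (induct t rule: tensor_induct)
  case (tprod x y)
  have psi_mul_legs: "tmap \<psi> id (assocL (tprod d (tmap (mul q) id W)))
      = tmap (ract (\<psi> (tprod d q))) id W"
    for d q W
    by (induct W rule: tensor_induct) (simp_all add: psi_mul)
  have psi_can_legs: "tmap \<psi> id (assocL (tmap id can (assocR (tprod s z))))
      = tmap (ract (\<psi> s)) id (\<rho> z)"
    for s z
    by (induct s rule: tensor_induct) (simp_all add: psi_mul_legs)
  have lin: "linmap (\<lambda>a. tmap (mul q) id (\<rho> a))" for q
    by (simp add: linmap_def)
  have ract_e_legs: "tmap (ract (tprod q e)) id W = tmap (tmap (mul q) id) id (tmap \<rho> id W)" for q W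
    by (induct W rule: tensor_induct) (simp_all add: lin rho_psi[symmetric])
  have mul_assocL: "tmap (tmap (mul q) id) id (assocL (tprod a X))
      = assocL (tprod (mul q a) X)" for q a X
    by (induct X rule: tensor_induct) simp_all
  have mul_Delta_legs: "tmap (tmap (mul q) id) id (assocL (tmap id \<Delta> W))
      = assocL (tmap id \<Delta> (tmap (mul q) id W))" for q W
    by (induct W rule: tensor_induct) (simp_all add: mul_assocL)
  show ?case
    by (simp add: lcan_def psi_can_legs ract_e_legs rho_coassoc mul_Delta_legs)
qed simp_all

lemma lcan_ell_r: "lcan (ell_r c) = assocR (tmap (\<lambda>c. tprod c one) id (\<Delta> c))"
proof -
  have inv_psi_legs: "tmap (inv \<psi>) id (assocL (tprod one W)) = tmap (\<lambda>c. tprod c one) id W" for W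
    by (induct W rule: tensor_induct) simp_all
  have inv_psi_psi: "tmap (inv \<psi>) id (tmap \<psi> id x) = x" for x :: "(('c \<times> 'p) \<times> 'c, 'k) vec"
    by (induct x rule: tensor_induct) simp_all
  have "tmap (inv \<psi>) id (tmap \<psi> id (assocL (lcan (ell_r c))))
      = tmap (inv \<psi>) id (assocL (tmap id \<Delta> (can (ell_r c))))"
    by (simp only: psi_lcan)
  then have "assocL (lcan (ell_r c)) = tmap (\<lambda>c. tprod c one) id (\<Delta> c)"
    by (simp add: can_ell_r inv_psi_legs inv_psi_psi)
  then show ?thesis
    by (metis assocR_assocL)
qed

lemma can_ell: "can (ell c) = tprod one c"
proof -
  have lin: "linmap (\<lambda>b. lcontr cosep_form (assocL (tprod d b)))" for d
    by (simp add: linmap_def)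
  have contr_legs: "tmap (mul (lcontr cosep_form (assocL (tprod d s)))) id (\<rho> z)
      = lcontr cosep_form (assocL (tprod d (tmap id can (assocR (tprod s z)))))" for d s z
    by (induct s rule: tensor_induct) simp_all
  have can_lavg_tprod: "can (tmap lavg id (assocL (tprod d t)))
      = lcontr cosep_form (assocL (tprod d (lcan t)))"
    for d t
    by (induct t rule: tensor_induct) (simp_all add: lavg_tprod lcan_def contr_legs lin)
  have can_lavg: "can (tmap lavg id (assocL w)) = lcontr cosep_form (assocL (tmap id lcan w))" for w
    by (induct w rule: tensor_induct) (simp_all add: can_lavg_tprod)
  let ?u = "\<lambda>c'. assocR (tmap (\<lambda>c. tprod c one) id (\<Delta> c'))"
  have lin_u: "linmap ?u"
    by (simp add: linmap_def)
  have lcan_legs: "tmap id lcan (tmap id ell_r w) = tmap id ?u w" for w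
    by (induct w rule: tensor_induct) (simp_all add: lcan_ell_r lin_u)
  have one_legs: "assocL (tprod x (assocR (tmap (\<lambda>c. tprod c one) id W)))
      = tmap id (tprod one) (assocL (tprod x W))" for x W
    by (induct W rule: tensor_induct) simp_all
  have u_legs: "assocL (tmap id ?u w) = tmap id (tprod one) (assocL (tmap id \<Delta> w))" for w
    by (induct w rule: tensor_induct) (simp_all add: one_legs lin_u)
  have contr_one: "lcontr cosep_form (tmap id (tprod one) (tmap \<Delta> id W))
      = tprod one (lcontr \<epsilon> W)" for W
    by (induct W rule: tensor_induct) simp_all
  show ?thesis
    by (simp add: ell_def can_lavg lcan_legs u_legs coassoc contr_one)
qed

lemma ell_right_colinear: "tmap id \<rho> (ell c) = assocR (tmap ell id (\<Delta> c))"
proof -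
  let ?r = "\<lambda>w. assocR (tmap ell_r id w)"
  have lin: "linmap ?r"
    by (simp add: linmap_def)
  have rho_lavg_legs: "tmap id \<rho> (tmap lavg id y) = tmap lavg \<rho> y" for y
    by (induct y rule: tensor_induct) simp_all
  have lavg_rho_assocL: "tmap lavg \<rho> (assocL (tprod a t))
      = tmap lavg id (assocL (tprod a (tmap id \<rho> t)))" for a t
    by (induct t rule: tensor_induct) simp_all
  have lavg_rho_ell_r: "tmap lavg \<rho> (assocL (tmap id ell_r x))
      = tmap lavg id (assocL (tmap id ?r (tmap id \<Delta> x)))"
    for x
    by (induct x rule: tensor_induct) (simp_all add: lavg_rho_assocL ell_r_colinear lin)
  have lavg_assocR_tprod: "assocR (tprod (tmap lavg id (assocL (tprod a' t))) d)
      = tmap lavg id (assocL (tprod a' (assocR (tprod t d))))" for a' t d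
    by (induct t rule: tensor_induct) simp_all
  have lavg_ell_r_assocR: "assocR (tprod (tmap lavg id (assocL (tmap id ell_r q))) d)
      = tmap lavg id (assocL (tmap id ?r (assocR (tprod q d))))" for q d
    by (induct q rule: tensor_induct) (simp_all add: lavg_assocR_tprod lin)
  have ell_assocR: "assocR (tmap ell id x)
      = tmap lavg id (assocL (tmap id ?r (assocR (tmap \<Delta> id x))))" for x
  proof (induct x rule: tensor_induct)
    case (tprod c d)
    show ?case
      by (simp add: ell_def[of c] lavg_ell_r_assocR)
  qed simp_all
  show ?thesis
    by (simp add: ell_def[of c] rho_lavg_legs lavg_rho_ell_r ell_assocR coassoc')
qed

lemma ell_left_colinear: "tmap lcoact id (ell c) = assocL (tmap id ell (\<Delta> c))"
proof -
  let ?k = "\<lambda>w. tmap id lavg (assocR w)"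
  have lin1: "linmap (\<lambda>w. tmap id lavg (assocR (tmap \<Delta> id w)))"
    by (simp add: linmap_def)
  have lin2: "linmap ?k"
    by (simp add: linmap_def)
  have lcoact_lavg_legs: "tmap lcoact id (tmap lavg id Y)
      = tmap (\<lambda>w. tmap id lavg (assocR (tmap \<Delta> id w))) id Y" for Y
    by (induct Y rule: tensor_induct) (simp_all add: lcoact_lavg lin1)
  have lavg_Delta_assocL: "tmap (\<lambda>w. tmap id lavg (assocR (tmap \<Delta> id w))) id (assocL (tprod a t))
      = tmap ?k id (assocL (tprod (\<Delta> a) t))" for a t
    by (induct t rule: tensor_induct) (simp_all add: lin1 lin2)
  have lavg_Delta_ell_r:
      "tmap (\<lambda>w. tmap id lavg (assocR (tmap \<Delta> id w))) id (assocL (tmap id ell_r x))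
      = tmap ?k id (assocL (tmap id ell_r (tmap \<Delta> id x)))" for x
    by (induct x rule: tensor_induct) (simp_all add: lavg_Delta_assocL)
  have assocL_lavg_tprod: "assocL (tprod a (tmap lavg id (assocL (tprod b t))))
      = tmap ?k id (assocL (tprod (tprod a b) t))"
    for a b t
    by (induct t rule: tensor_induct) (simp_all add: lin2)
  have assocL_lavg_ell_r: "assocL (tprod a (tmap lavg id (assocL (tmap id ell_r q))))
      = tmap ?k id (assocL (tmap id ell_r (assocL (tprod a q))))" for a q
    by (induct q rule: tensor_induct) (simp_all add: assocL_lavg_tprod)
  have assocL_ell: "assocL (tmap id ell v)
      = tmap ?k id (assocL (tmap id ell_r (assocL (tmap id \<Delta> v))))" for v
  proof (induct v rule: tensor_induct)
    case (tprod c d)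
    show ?case
      by (simp add: ell_def[of d] assocL_lavg_ell_r)
  qed simp_all
  show ?thesis
    by (simp add: ell_def[of c] lcoact_lavg_legs lavg_Delta_ell_r assocL_ell coassoc)
qed

theorem strong_connection_ell: "strong_connection mul one \<Delta> \<rho> \<psi> e ell"
  unfolding strong_connection_def lcoact_def[symmetric]
  by (simp add: ell_e can_ell ell_right_colinear ell_left_colinear)

end

theorem mainTheorem9:
  fixes mul :: "('p, 'k::field) vec \<Rightarrow> ('p, 'k) vec \<Rightarrow> ('p, 'k) vec"
    and one :: "('p, 'k) vec"
    and \<Delta> :: "('c, 'k) vec \<Rightarrow> ('c \<times> 'c, 'k) vec"
    and \<epsilon> :: "('c, 'k) vec \<Rightarrow> 'k"
    and \<psi> :: "('c \<times> 'p, 'k) vec \<Rightarrow> ('p \<times> 'c, 'k) vec"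
    and \<rho> :: "('p, 'k) vec \<Rightarrow> ('p \<times> 'c, 'k) vec"
    and e :: "('c, 'k) vec"
    and \<tau> :: "('c, 'k) vec \<Rightarrow> ('p \<times> 'p, 'k) vec"
  assumes "algebra mul one"
    and "coalgebra \<Delta> \<epsilon>"
    and "coseparable \<Delta> \<epsilon>"
    and "entwining mul one \<Delta> \<epsilon> \<psi>"
    and "entw_extension mul \<Delta> \<epsilon> \<psi> \<rho>"
    and "grouplike \<Delta> \<epsilon> e"
    and "copointed \<psi> \<rho> e"
    and "bij \<psi>"
    and "colifting mul one \<rho> \<tau>"
  shows "bij_betw (canB mul \<rho>) (tensorB mul (coinv mul \<rho>)) UNIV
    \<and> principal mul one \<Delta> \<rho> e"
proof -
  obtain \<delta> where "coseparable_coalg \<Delta> \<epsilon> \<delta>"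
    using assms(2,3) by (rule coseparable_coalgI)
  then interpret colifted_ext_bij \<Delta> \<epsilon> mul one \<psi> \<rho> e \<delta> \<tau>
    using assms
    by (simp add: colifted_ext_bij_def colifted_ext_bij_axioms_def colifted_ext_def
        colifted_ext_axioms_def entwined_ext_def entwined_ext_axioms_def coalg_def)
  interpret S: strong_conn_ext \<Delta> \<epsilon> mul one \<psi> \<rho> e ell
    by unfold_locales (rule strong_connection_ell)
  have bij_can: "bij_betw (canB mul \<rho>) (tensorB mul (coinv mul \<rho>)) UNIV"
    by (rule S.canB_bij)
  then show ?thesis
    unfolding principal_def using psican_eq_psi[OF bij_can] bij_psi strong_connection_ell by auto
qed

end
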